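(* Algorithm DLE solves the disconnecting leader election problem: for every fair execution starting from a permitted initial configuration, all particles eventually reach a final state, and a configuration is reached in which exactly one particle has status $leader$ and all other particles have status $follower$.
   Context: Geometry. The triangular grid $G$ has as vertices ("points") the points of the regular triangular lattice in the plane, adjacent iff at unit distance; each point has six incident edges, cyclically ordered clockwise. A shape is a finite set of points (identified with its induced subgraph). For a connected shape $S$: the unbounded face is the outer face; a bounded face containing a grid point not in $S$ is a hole, whose grid points are hole points; the area of $S$ is $S$ together with its hole points; $S$ is simply-connected if it has no holes; the outer boundary is the set of points of $S$ on the boundary of the outer face; a boundary point is a point of $S$ adjacent to a point not in $S$. For a boundary point $v$, a local boundary $B$ of $v$ w.r.t. $S$ is a maximal clockwise cyclic interval of consecutive edges at $v$ leading to points not in $S$, with boundary count $c(v,B)=|B|-2$. $v$ is redundant if its neighbors in $S$ induce a connected subgraph; erodable if redundant and on the outer boundary (then it has a single local boundary $B$); SCE (strictly convex and erodable) if erodable and $c(v,B)>0$. Model (amoebot, strong scheduler). Anonymous particles with constant memory each occupy one point (contracted) or two adjacent points (expanded; a head and a tail); no point is occupied twice. Each particle labels the edges at its occupied point by ports $0,\dots,5$; all particles share the same (clockwise) chirality, and a particle knows the port number a neighboring particle uses for their common edge. Particles communicate by reading and writing the memories of neighboring particles. A contracted particle may expand into an adjacent unoccupied point (which becomes its head); an expanded particle may contract into either of its points; handovers between an expanded and a contracted neighbor are allowed. An execution is a sequence of atomic activations of single particles; in an activation a particle reads its neighbors' memories, computes, updates its own and neighbors' memories, and performs at most one movement. A particle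 in a final state does nothing when activated. An execution is fair if each particle is activated infinitely often; a round is a minimal execution fragment in which every particle is activated at least once. A permitted initial configuration $C_0$ has all particles contracted, at least one particle, and the set $S_P(C_0)$ of occupied points connected. Input: each particle knows, for each port $i$, whether the point reached via port $i$ lies in the outer face of $S_P(C_0)$. The system's shape need not remain connected. Disconnecting leader election: each particle has an output $status \in \{undecided, leader, follower\}$; the goal predicate is that exactly one particle is $leader$ and all others are $follower$. An algorithm solves it if in every fair execution all particles reach a final state and a configuration satisfying the predicate is reached. Algorithm DLE. It maintains a set $S_e$ of eligible points, initially the area of $S_P(C_0)$; points are only removed, never added. Each particle $p$ has $status$ (initially $undecided$) and $eligible[0..5]$ (initially $eligible[i]$ true iff the point via port $i$ is not in the outer face of $S_P(C_0)$), referring to points adjacent to $p$'s head. On activation: (a) if $p$ is expanded, it contracts into its head; (b) else if $p$ and all its neighbors have status $\ne undecided$, $p$ terminates (enters a final state); (c) else if $p.status=undecided$ ($p$ contracted at point $v$): if by its $eligible$ array no neighbor of $v$ is in $S_e$, it sets $status:=leader$; else if $v$ is SCE w.r.t. $S_e$, then $v$ is removed from $S_e$ and every neighboring particle whose head is adjacent to $v$ sets its $eligible$ entry for $v$ to false; then, if $v$ has an adjacent point $u\in S_e$ not occupied by any particle, $p$ sets its $eligible$ entries to true except the one for the port from $u$ back to $v$ (set false) and expands into $u$; otherwise $p$ sets $status:=follower$. In all other cases $p$ does nothing. *)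

theory Defs
  imports Main
begin

text \<open>Points of the triangular lattice in axial coordinates: (a,b) stands for
  a*e1 + b*e2 with e1 = (1,0), e2 = (1/2, sqrt 3 / 2).  The six unit directions
  are indexed 0..5 in clockwise order (indices taken mod 6).\<close>

type_synonym point = "int \<times> int"

definition dir :: "nat \<Rightarrow> point" where
  "dir i = (let k = i mod 6 in
     if k = 0 then (1, 0) else if k = 1 then (1, -1) else if k = 2 then (0, -1)
     else if k = 3 then (-1, 0) else if k = 4 then (-1, 1) else (0, 1))"

definition nb :: "point \<Rightarrow> nat \<Rightarrow> point" where
  "nb v i = (fst v + fst (dir i), snd v + snd (dir i))"

definition adj :: "point \<Rightarrow> point \<Rightarrow> bool" where
  "adj u w \<longleftrightarrow> (\<exists>i<6. w = nb u i)"

definition induced_edges :: "point set \<Rightarrow> (point \<times> point) set" where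
  "induced_edges A = {(x, y). x \<in> A \<and> y \<in> A \<and> adj x y}"

definition connected_pts :: "point set \<Rightarrow> bool" where
  "connected_pts A \<longleftrightarrow> (\<forall>x\<in>A. \<forall>y\<in>A. (x, y) \<in> (induced_edges A)\<^sup>*)"

definition outer_face :: "point set \<Rightarrow> point \<Rightarrow> bool" where
  "outer_face S p \<longleftrightarrow> p \<notin> S \<and> infinite {q. (p, q) \<in> (induced_edges (- S))\<^sup>*}"

text \<open>Area: S together with its hole points, i.e. all grid points not in the outer face.\<close>
definition area :: "point set \<Rightarrow> point set" where
  "area S = {p. \<not> outer_face S p}"

definition outer_boundary :: "point set \<Rightarrow> point set" where
  "outer_boundary S = {v \<in> S. \<exists>i<6. outer_face S (nb v i)}"

definition boundary_point :: "point set \<Rightarrow> point \<Rightarrow> bool" where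
  "boundary_point S v \<longleftrightarrow> v \<in> S \<and> (\<exists>i<6. nb v i \<notin> S)"

definition redundant :: "point set \<Rightarrow> point \<Rightarrow> bool" where
  "redundant S v \<longleftrightarrow> boundary_point S v \<and> connected_pts {nb v i | i. i < 6 \<and> nb v i \<in> S}"

definition out_dirs :: "point set \<Rightarrow> point \<Rightarrow> nat set" where
  "out_dirs S v = {i. i < 6 \<and> nb v i \<notin> S}"

definition cyc_int :: "nat \<Rightarrow> nat \<Rightarrow> nat set" where
  "cyc_int i k = {(i + j) mod 6 | j. j < k}"

definition is_cyc_int :: "nat set \<Rightarrow> bool" where
  "is_cyc_int B \<longleftrightarrow> (\<exists>i<6. \<exists>k. 1 \<le> k \<and> k \<le> 6 \<and> B = cyc_int i k)"

definition local_boundary :: "point set \<Rightarrow> point \<Rightarrow> nat set \<Rightarrow> bool" where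
  "local_boundary S v B \<longleftrightarrow> boundary_point S v \<and> is_cyc_int B \<and> B \<subseteq> out_dirs S v \<and>
     (\<forall>B'. is_cyc_int B' \<and> B' \<subseteq> out_dirs S v \<and> B \<subseteq> B' \<longrightarrow> B' = B)"

definition bcount :: "nat set \<Rightarrow> int" where
  "bcount B = int (card B) - 2"

definition erodable :: "point set \<Rightarrow> point \<Rightarrow> bool" where
  "erodable S v \<longleftrightarrow> redundant S v \<and> v \<in> outer_boundary S"

definition SCE :: "point set \<Rightarrow> point \<Rightarrow> bool" where
  "SCE S v \<longleftrightarrow> erodable S v \<and> (\<exists>B. local_boundary S v B \<and> bcount B > 0)"

datatype pstatus = Undecided | Leader | Follower

text \<open>A configuration: head and tail of each particle (equal iff contracted),
  memory (status, eligible array indexed by the particle's ports 0..5, final flag),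
  and the (ghost) set S_e of eligible points maintained by algorithm DLE.\<close>
record 'p config =
  phead :: "'p \<Rightarrow> point"
  ptail :: "'p \<Rightarrow> point"
  st    :: "'p \<Rightarrow> pstatus"
  elig  :: "'p \<Rightarrow> nat \<Rightarrow> bool"
  fin   :: "'p \<Rightarrow> bool"
  Se    :: "point set"

text \<open>Port labelling: all particles share clockwise chirality; particle p's port i
  corresponds to global direction (i + off p) mod 6.\<close>
definition port_pt :: "('p \<Rightarrow> nat) \<Rightarrow> 'p \<Rightarrow> point \<Rightarrow> nat \<Rightarrow> point" where
  "port_pt off p x i = nb x (i + off p)"

definition contracted :: "'p config \<Rightarrow> 'p \<Rightarrow> bool" where
  "contracted c p \<longleftrightarrow> phead c p = ptail c p"

definition occupied :: "'p set \<Rightarrow> 'p config \<Rightarrow> point set" where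
  "occupied P c = phead c ` P \<union> ptail c ` P"

definition neighbours :: "'p set \<Rightarrow> 'p config \<Rightarrow> 'p \<Rightarrow> 'p set" where
  "neighbours P c p = {q \<in> P. q \<noteq> p \<and>
     (\<exists>x\<in>{phead c p, ptail c p}. \<exists>y\<in>{phead c q, ptail c q}. adj x y)}"

definition dle_succ :: "'p set \<Rightarrow> ('p \<Rightarrow> nat) \<Rightarrow> 'p config \<Rightarrow> 'p \<Rightarrow> 'p config set" where
  "dle_succ P off c p =
    (if fin c p then {c}
     else if \<not> contracted c p then {c\<lparr>ptail := (ptail c)(p := phead c p)\<rparr>}
     else if st c p \<noteq> Undecided \<and> (\<forall>q\<in>neighbours P c p. st c q \<noteq> Undecided)
       then {c\<lparr>fin := (fin c)(p := True)\<rparr>}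
     else if st c p = Undecided then
       (let v = phead c p in
        if (\<forall>i<6. \<not> elig c p i) then {c\<lparr>st := (st c)(p := Leader)\<rparr>}
        else if SCE (Se c) v then
          (let S' = Se c - {v};
               \<comment> \<open>every particle whose head is adjacent to v sets its eligible entry for v to false\<close>
               E' = (\<lambda>q j. elig c q j \<and> \<not> (adj (phead c q) v \<and> port_pt off q (phead c q) j = v));
               U = {u. adj v u \<and> u \<in> S' \<and> u \<notin> occupied P c}
           in if U \<noteq> {} then
                {c\<lparr>Se := S',
                   elig := E'(p := (\<lambda>j. port_pt off p u j \<noteq> v)),
                   phead := (phead c)(p := u)\<rparr> | u. u \<in> U}
              else {c\<lparr>Se := S', elig := E', st := (st c)(p := Follower)\<rparr>})
        else {c})
     else {c})"

definition permitted_init :: "'p set \<Rightarrow> ('p \<Rightarrow> nat) \<Rightarrow> 'p config \<Rightarrow> bool" where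
  "permitted_init P off c0 \<longleftrightarrow>
     finite P \<and> P \<noteq> {} \<and> inj_on (phead c0) P \<and>
     (\<forall>p\<in>P. contracted c0 p) \<and> connected_pts (phead c0 ` P) \<and>
     (\<forall>p\<in>P. st c0 p = Undecided \<and> \<not> fin c0 p \<and>
        (\<forall>i<6. elig c0 p i \<longleftrightarrow> \<not> outer_face (phead c0 ` P) (port_pt off p (phead c0 p) i))) \<and>
     Se c0 = area (phead c0 ` P)"

definition fair_exec :: "'p set \<Rightarrow> ('p \<Rightarrow> nat) \<Rightarrow> (nat \<Rightarrow> 'p config) \<Rightarrow> (nat \<Rightarrow> 'p) \<Rightarrow> bool" where
  "fair_exec P off c a \<longleftrightarrow>
     (\<forall>n. a n \<in> P \<and> c (Suc n) \<in> dle_succ P off (c n) (a n)) \<and>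
     (\<forall>p\<in>P. \<forall>n. \<exists>m\<ge>n. a m = p)"

end

theory Submission
  imports Defs
begin

text \<open>
  DLE erodes the eligible set Se one SCE point at a time.  Invariantly, Se is a finite, nonempty,
  connected and simply connected shape; each undecided particle sits on Se and its eligible array
  describes Se; a leader exists only when Se is the singleton of its position; and each eligible
  point carries a non-follower or is an unoccupied point all of whose neighbours are eligible.
  Each activation that changes the configuration lowers a natural-number potential, so a fair
  execution becomes constant.  In the limit every particle is final: otherwise some undecided
  particle sees two eligible points, and a simply connected shape with two points has a convex
  corner, which is SCE and on the boundary of Se, so it carries a non-follower that would still
  erode it.  A point of the shape extremal in the x-direction is a convex corner unless it is a
  pinch point whose removal disconnects the shape (a discrete Jordan curve argument: a closed
  walk through it crosses a horizontal ray from an outside neighbour an odd number of times);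
  then induction applies to both sides.  Finally the rightmost eligible point carries a
  non-follower, which is the unique leader.
\<close>

section \<open>Grid geometry and connectivity\<close>

lemma nb_mod: "nb v (i mod 6) = nb v i"
  by (simp add: nb_def dir_def)

lemma nb_add6: "nb v (i + 6) = nb v i"
  by (metis nb_mod mod_add_self2)

lemma nb_cases:
  obtains "i mod 6 = 0" "nb v i = (fst v + 1, snd v)"
  | "i mod 6 = 1" "nb v i = (fst v + 1, snd v - 1)"
  | "i mod 6 = 2" "nb v i = (fst v, snd v - 1)"
  | "i mod 6 = 3" "nb v i = (fst v - 1, snd v)"
  | "i mod 6 = 4" "nb v i = (fst v - 1, snd v + 1)"
  | "i mod 6 = 5" "nb v i = (fst v, snd v + 1)"
proof -
  have "i mod 6 < 6" by simp
  then have "i mod 6 = 0 \<or> i mod 6 = 1 \<or> i mod 6 = 2 \<or> i mod 6 = 3 \<or> i mod 6 = 4 \<or> i mod 6 = 5"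
    by linarith
  then show ?thesis using that by (cases v) (auto simp: nb_def dir_def Let_def)
qed

lemma nb_coords:
  "nb v 0 = (fst v + 1, snd v)" "nb v 1 = (fst v + 1, snd v - 1)" "nb v 2 = (fst v, snd v - 1)"
  "nb v 3 = (fst v - 1, snd v)" "nb v 4 = (fst v - 1, snd v + 1)" "nb v 5 = (fst v, snd v + 1)"
  "nb v (Suc 0) = (fst v + 1, snd v - 1)"
  by (simp_all add: nb_def dir_def)

lemma nb_eq_nb_iff: "nb v i = nb v j \<longleftrightarrow> i mod 6 = j mod 6"
  by (cases rule: nb_cases[of i v]; cases rule: nb_cases[of j v]) (auto simp: prod_eq_iff nb_mod)

lemma nb_nb_opposite: "nb (nb v i) (i + 3) = v"
proof -
  have "(i + 3) mod 6 = (i mod 6 + 3) mod 6" by presburger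
  then show ?thesis by (cases rule: nb_cases[of i v]) (auto simp: nb_def dir_def Let_def)
qed

lemma nb_nb_next: "nb (nb v i) (i + 2) = nb v (i + 1)"
proof -
  have "(i + 2) mod 6 = (i mod 6 + 2) mod 6" "(i + 1) mod 6 = (i mod 6 + 1) mod 6" by presburger+
  then show ?thesis by (cases rule: nb_cases[of i v]) (auto simp: nb_def dir_def Let_def)
qed

lemma nb_neq_self: "nb v i \<noteq> v"
  by (cases rule: nb_cases[of i v]) (auto simp: prod_eq_iff)

lemma adj_nb: "adj v (nb v i)"
  unfolding adj_def by (rule exI[of _ "i mod 6"]) (simp add: nb_mod)

lemma adj_sym: "adj u w \<Longrightarrow> adj w u"
  by (metis adj_def adj_nb nb_nb_opposite)

lemma adj_irrefl: "\<not> adj v v"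
  unfolding adj_def using nb_neq_self by metis

lemma adj_nb_next: "adj (nb v i) (nb v (i + 1))"
  by (metis adj_nb nb_nb_next)

lemma adj_cases:
  assumes "adj x y"
  shows "y = (fst x + 1, snd x) \<or> y = (fst x + 1, snd x - 1) \<or> y = (fst x, snd x - 1) \<or>
         y = (fst x - 1, snd x) \<or> y = (fst x - 1, snd x + 1) \<or> y = (fst x, snd x + 1)"
proof -
  obtain i where "y = nb x i" using assms adj_def by blast
  then show ?thesis by (cases rule: nb_cases[of i x]) auto
qed

text \<open>Twice the Euclidean abscissa of the point (a, b) = a e1 + b e2.\<close>
definition xcoord2 :: "point \<Rightarrow> int" where
  "xcoord2 p = 2 * fst p + snd p"

lemma xcoord2_nb:
  "xcoord2 (nb v 0) = xcoord2 v + 2" "xcoord2 (nb v 1) = xcoord2 v + 1"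
  "xcoord2 (nb v 2) = xcoord2 v - 1" "xcoord2 (nb v 3) = xcoord2 v - 2"
  "xcoord2 (nb v 4) = xcoord2 v - 1" "xcoord2 (nb v 5) = xcoord2 v + 1"
  by (simp_all add: xcoord2_def nb_def dir_def)

lemma xcoord2_nb_neq: "xcoord2 (nb v i) \<noteq> xcoord2 v"
  by (cases rule: nb_cases[of i v]) (auto simp: xcoord2_def)

lemma nb_if_xcoord2_le:
  "xcoord2 (nb v j) \<le> xcoord2 v \<Longrightarrow> nb v j \<in> {nb v 2, nb v 3, nb v 4}"
  by (cases rule: nb_cases[of j v]) (simp_all add: xcoord2_def nb_coords prod_eq_iff)

lemma nb_if_xcoord2_ge:
  "xcoord2 v \<le> xcoord2 (nb v j) \<Longrightarrow> nb v j \<in> {nb v 5, nb v 0, nb v 1}"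
  by (cases rule: nb_cases[of j v]) (simp_all add: xcoord2_def nb_coords prod_eq_iff)

abbreviation E :: "point set \<Rightarrow> (point \<times> point) set" where
  "E A \<equiv> induced_edges A"

definition component :: "point set \<Rightarrow> point \<Rightarrow> point set" where
  "component A p = {q. (p, q) \<in> (E A)\<^sup>*}"

definition simply_connected :: "point set \<Rightarrow> bool" where
  "simply_connected S \<longleftrightarrow> (\<forall>p. p \<notin> S \<longrightarrow> outer_face S p)"

lemma E_iff: "(x, y) \<in> E A \<longleftrightarrow> x \<in> A \<and> y \<in> A \<and> adj x y"
  by (simp add: induced_edges_def)

lemma E_rtrancl_sym: "(x, y) \<in> (E A)\<^sup>* \<Longrightarrow> (y, x) \<in> (E A)\<^sup>*"
proof (induction rule: rtrancl_induct)
  case (step y z)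
  then have "(z, y) \<in> E A" by (auto simp: E_iff adj_sym)
  with step show ?case by (meson converse_rtrancl_into_rtrancl)
qed simp

lemma E_rtrancl_mono: "A \<subseteq> B \<Longrightarrow> (x, y) \<in> (E A)\<^sup>* \<Longrightarrow> (x, y) \<in> (E B)\<^sup>*"
  by (rule rtrancl_mono[THEN subsetD]) (auto simp: induced_edges_def)

lemma E_rtrancl_in: "(x, y) \<in> (E A)\<^sup>* \<Longrightarrow> x \<in> A \<Longrightarrow> y \<in> A"
  by (induction rule: rtrancl_induct) (simp_all add: E_iff)

lemma E_rtrancl_edge: "x \<in> A \<Longrightarrow> y \<in> A \<Longrightarrow> adj x y \<Longrightarrow> (x, y) \<in> (E A)\<^sup>*"
  by (simp add: E_iff r_into_rtrancl)

lemma E_rtrancl_join: "(x, z) \<in> (E A)\<^sup>* \<Longrightarrow> (y, z) \<in> (E A)\<^sup>* \<Longrightarrow> (x, y) \<in> (E A)\<^sup>*"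
  by (meson E_rtrancl_sym rtrancl_trans)

lemma E_rtrancl_component: "(x, y) \<in> (E A)\<^sup>* \<Longrightarrow> (x, y) \<in> (E (component A x))\<^sup>*"
proof (induction rule: rtrancl_induct)
  case (step y z)
  then have "y \<in> component A x" "z \<in> component A x" by (auto simp: component_def)
  with step(2) have "(y, z) \<in> E (component A x)" by (auto simp: E_iff)
  with step(3) show ?case by simp
qed simp

lemma component_eq: "(p, q) \<in> (E A)\<^sup>* \<Longrightarrow> component A q = component A p"
  unfolding component_def by (meson E_rtrancl_sym rtrancl_trans)

lemma component_subset: "x \<in> A \<Longrightarrow> component A x \<subseteq> A"
  unfolding component_def using E_rtrancl_in by blast

lemma component_mono: "A \<subseteq> B \<Longrightarrow> component A p \<subseteq> component B p"
  unfolding component_def using E_rtrancl_mono by blast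

lemma outer_face_component: "outer_face S p \<longleftrightarrow> p \<notin> S \<and> infinite (component (- S) p)"
  by (simp add: outer_face_def component_def)

lemma outer_face_via:
  assumes "S' \<subseteq> S" "outer_face S q" "p \<notin> S'" "(p, q) \<in> (E (- S'))\<^sup>*"
  shows "outer_face S' p"
proof -
  have "component (- S) q \<subseteq> component (- S') q" using assms(1) by (intro component_mono) auto
  also have "component (- S') q = component (- S') p" using assms(4) by (rule component_eq)
  finally show ?thesis using assms by (auto simp: outer_face_component dest: finite_subset)
qed

lemma outer_face_antimono: "S' \<subseteq> S \<Longrightarrow> outer_face S p \<Longrightarrow> outer_face S' p"
  using outer_face_via[of S' S p p] by (auto simp: outer_face_def)

lemma connected_has_nb:
  assumes "connected_pts S" "v \<in> S" "w \<in> S" "w \<noteq> v"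
  shows "\<exists>i<6. nb v i \<in> S"
proof -
  have "(v, w) \<in> (E S)\<^sup>*" using assms connected_pts_def by blast
  then obtain z where "(v, z) \<in> E S" using assms(4) by (metis converse_rtranclE)
  then show ?thesis by (auto simp: E_iff adj_def)
qed

lemma connected_isolated_singleton:
  assumes "connected_pts S" "v \<in> S" "\<forall>i<6. nb v i \<notin> S"
  shows "S = {v}"
  using connected_has_nb[OF assms(1,2)] assms(2,3) by blast

lemma reach_avoiding:
  assumes "(z, t) \<in> (E S)\<^sup>*" "z \<in> S - {v}"
  shows "(\<exists>n\<in>S - {v}. adj v n \<and> (z, n) \<in> (E (S - {v}))\<^sup>*) \<or> (z, t) \<in> (E (S - {v}))\<^sup>*"
  using assms(1)
proof (induction rule: rtrancl_induct)
  case (step t t')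
  show ?case
  proof (cases "t' = v")
    case True
    with step have "adj v t" "t \<in> S - {v}" if "(z, t) \<in> (E (S - {v}))\<^sup>*"
      using that E_rtrancl_in[OF that assms(2)] by (auto simp: E_iff adj_sym)
    with step.IH show ?thesis by blast
  next
    case False
    have "(z, t') \<in> (E (S - {v}))\<^sup>*" if zt: "(z, t) \<in> (E (S - {v}))\<^sup>*"
    proof -
      have "t \<in> S - {v}" using E_rtrancl_in[OF zt assms(2)] .
      with step(2) False have "(t, t') \<in> E (S - {v})" by (auto simp: E_iff)
      with zt show ?thesis by simp
    qed
    with step.IH show ?thesis by blast
  qed
qed simp

definition nbset :: "point set \<Rightarrow> point \<Rightarrow> point set" where
  "nbset S v = {nb v i | i. i < 6 \<and> nb v i \<in> S}"

lemma nbset_adj: "n \<in> S \<Longrightarrow> adj v n \<Longrightarrow> n \<in> nbset S v"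
  by (auto simp: nbset_def adj_def)

lemma connected_Diff_redundant:
  assumes con: "connected_pts S" and v: "v \<in> S" and nbs: "connected_pts (nbset S v)"
  shows "connected_pts (S - {v})"
  unfolding connected_pts_def
proof (intro ballI)
  fix x y assume x: "x \<in> S - {v}" and y: "y \<in> S - {v}"
  have sub: "nbset S v \<subseteq> S - {v}"
  proof
    fix n assume "n \<in> nbset S v"
    then obtain i where "n = nb v i" "n \<in> S" by (auto simp: nbset_def)
    then show "n \<in> S - {v}" using nb_neq_self[of v i] by simp
  qed
  have "(x, y) \<in> (E S)\<^sup>*" "(y, x) \<in> (E S)\<^sup>*" using con x y by (auto simp: connected_pts_def)
  from this[THEN reach_avoiding] x y
  consider "(x, y) \<in> (E (S - {v}))\<^sup>*" | "(y, x) \<in> (E (S - {v}))\<^sup>*"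
    | n1 n2 where "n1 \<in> nbset S v" "n2 \<in> nbset S v"
      "(x, n1) \<in> (E (S - {v}))\<^sup>*" "(y, n2) \<in> (E (S - {v}))\<^sup>*"
    by (meson DiffD1 nbset_adj)
  then show "(x, y) \<in> (E (S - {v}))\<^sup>*"
  proof cases
    case 3
    then have "(n1, n2) \<in> (E (S - {v}))\<^sup>*"
      using nbs E_rtrancl_mono[OF sub] by (auto simp: connected_pts_def)
    with 3 show ?thesis by (meson E_rtrancl_join rtrancl_trans)
  qed (auto intro: E_rtrancl_sym)
qed

lemma walk_of_E_rtrancl:
  assumes "(x, y) \<in> (E A)\<^sup>*" "x \<in> A"
  shows "\<exists>xs. xs \<noteq> [] \<and> hd xs = x \<and> last xs = y \<and> successively adj xs \<and> set xs \<subseteq> A"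
  using assms(1)
proof (induction rule: rtrancl_induct)
  case base then show ?case using assms(2) by (intro exI[of _ "[x]"]) auto
next
  case (step y z)
  then obtain xs where "xs \<noteq> []" "hd xs = x" "last xs = y" "successively adj xs" "set xs \<subseteq> A"
    by blast
  with step(2) show ?case
    by (intro exI[of _ "xs @ [z]"]) (auto simp: E_iff successively_append_iff)
qed

definition ray :: "point \<Rightarrow> nat \<Rightarrow> nat \<Rightarrow> point" where
  "ray p i k = (fst p + int k * fst (dir i), snd p + int k * snd (dir i))"

lemma ray_coords:
  "ray p 0 k = (fst p + int k, snd p)" "ray p 2 k = (fst p, snd p - int k)"
  "ray p 3 k = (fst p - int k, snd p)" "ray p 5 k = (fst p, snd p + int k)"
  by (simp_all add: ray_def dir_def)

lemma inj_ray: "inj (ray p i)"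
proof (rule injI)
  fix k l assume "ray p i k = ray p i l"
  moreover have "fst (dir i) \<noteq> 0 \<or> snd (dir i) \<noteq> 0" by (simp add: dir_def Let_def)
  ultimately show "k = l" by (auto simp: ray_def)
qed

lemma outer_face_if_ray_avoids:
  assumes "\<forall>k. ray p i k \<notin> S"
  shows "outer_face S p"
proof -
  have "(p, ray p i k) \<in> (E (- S))\<^sup>*" for k
  proof (induction k)
    case (Suc k)
    have "ray p i (Suc k) = nb (ray p i k) i" by (simp add: ray_def nb_def algebra_simps)
    then have "adj (ray p i k) (ray p i (Suc k))" by (simp add: adj_nb)
    then have "(ray p i k, ray p i (Suc k)) \<in> E (- S)" using assms by (simp add: E_iff)
    with Suc show ?case by simp
  qed (simp add: ray_def)
  then have "range (ray p i) \<subseteq> component (- S) p" by (auto simp: component_def)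
  moreover have "infinite (range (ray p i))" using inj_ray finite_imageD by blast
  moreover have "p \<notin> S" using assms[rule_format, of 0] by (simp add: ray_def)
  ultimately show ?thesis by (auto simp: outer_face_component dest: finite_subset)
qed

section \<open>Convex corners\<close>

lemma less_6_cases: "(r::nat) < 6 \<Longrightarrow> r = 0 \<or> r = 1 \<or> r = 2 \<or> r = 3 \<or> r = 4 \<or> r = 5"
  by linarith

lemma add_offset_mod6: "x < 6 \<Longrightarrow> (i + (x + 6 - i mod 6) mod 6) mod 6 = (x::nat)"
proof -
  assume x: "x < 6"
  have "(i + (x + 6 - i mod 6) mod 6) mod 6 = (i mod 6 + (x + 6 - i mod 6) mod 6) mod 6"
    by (metis mod_add_left_eq)
  also have "\<dots> = x" using less_6_cases[of "i mod 6"] less_6_cases[OF x] by auto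
  finally show ?thesis .
qed

lemma offset_add_mod6: "j < 6 \<Longrightarrow> ((i + j) mod 6 + 6 - i mod 6) mod 6 = (j::nat)"
proof -
  assume j: "j < 6"
  have "(i + j) mod 6 = (i mod 6 + j) mod 6" by (metis mod_add_left_eq)
  moreover have "((i mod 6 + j) mod 6 + 6 - i mod 6) mod 6 = j"
    using less_6_cases[of "i mod 6"] less_6_cases[OF j] by auto
  ultimately show ?thesis by simp
qed

lemma cyc_int_image: "cyc_int i k = (\<lambda>j. (i + j) mod 6) ` {..<k}"
  by (auto simp: cyc_int_def)

lemma card_cyc_int_le: "card (cyc_int i k) \<le> k"
  unfolding cyc_int_image by (metis card_image_le card_lessThan finite_lessThan)

lemma card_cyc_int: "k \<le> 6 \<Longrightarrow> card (cyc_int i k) = k"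
proof -
  assume "k \<le> 6"
  then have "inj_on (\<lambda>j. (i + j) mod 6) {..<k}"
    by (intro inj_onI) (metis lessThan_iff offset_add_mod6 order_less_le_trans)
  then show ?thesis unfolding cyc_int_image by (simp add: card_image)
qed

lemma cyc_int_mem: "j < k \<Longrightarrow> (i + j) mod 6 \<in> cyc_int i k"
  by (auto simp: cyc_int_def)

lemma mem_cyc_int_iff: "k \<le> 6 \<Longrightarrow> x \<in> cyc_int i k \<longleftrightarrow> x < 6 \<and> (x + 6 - i mod 6) mod 6 < k"
proof
  assume "k \<le> 6" "x \<in> cyc_int i k"
  then show "x < 6 \<and> (x + 6 - i mod 6) mod 6 < k"
    by (auto simp: cyc_int_def offset_add_mod6)
next
  assume "x < 6 \<and> (x + 6 - i mod 6) mod 6 < k"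
  then show "x \<in> cyc_int i k"
    using add_offset_mod6[of x i] cyc_int_mem[of "(x + 6 - i mod 6) mod 6" k i] by auto
qed

lemma cyc_int_complement:
  assumes "k \<le> 6"
  shows "{j. j < 6 \<and> j \<notin> cyc_int i k} = cyc_int ((i + k) mod 6) (6 - k)"
proof -
  have "(\<not> (j + 6 - r) mod 6 < k) \<longleftrightarrow> (j + 6 - (r + k) mod 6) mod 6 < 6 - k"
    if "r < 6" "j < 6" for r j
  proof -
    have "k = 0 \<or> k = 1 \<or> k = 2 \<or> k = 3 \<or> k = 4 \<or> k = 5 \<or> k = 6" using assms by linarith
    then show ?thesis using less_6_cases[OF \<open>r < 6\<close>] less_6_cases[OF \<open>j < 6\<close>] by auto
  qed
  moreover have "(i + k) mod 6 mod 6 = (i mod 6 + k) mod 6" by (simp add: mod_add_left_eq)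
  ultimately show ?thesis
    using assms by (auto simp: mem_cyc_int_iff)
qed

lemma cyc_int_small:
  "cyc_int i (Suc 0) = {i mod 6}" "cyc_int i 2 = {i mod 6, (i + 1) mod 6}"
  "cyc_int i 3 = {i mod 6, (i + 1) mod 6, (i + 2) mod 6}"
proof -
  have "{..<Suc 0} = {0}" "{..<2::nat} = {0, 1}" "{..<3::nat} = {0, 1, 2}" by auto
  then show "cyc_int i (Suc 0) = {i mod 6}" "cyc_int i 2 = {i mod 6, (i + 1) mod 6}"
    "cyc_int i 3 = {i mod 6, (i + 1) mod 6, (i + 2) mod 6}"
    by (simp_all add: cyc_int_image)
qed

definition convex_corner :: "point set \<Rightarrow> point \<Rightarrow> bool" where
  "convex_corner S u \<longleftrightarrow>
     u \<in> S \<and> (\<exists>i k. 1 \<le> k \<and> k \<le> 3 \<and> {j. j < 6 \<and> nb u j \<in> S} = cyc_int i k)"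

lemma connected_arc: "connected_pts {nb u (i + j) | j. j < k}"
proof -
  let ?A = "{nb u (i + j) | j. j < k}"
  have "(nb u i, nb u (i + j)) \<in> (E ?A)\<^sup>*" if "j < k" for j
    using that
  proof (induction j)
    case (Suc j)
    have mem: "nb u (i + j') \<in> ?A" if "j' < k" for j' using that by blast
    have "nb u (i + j) \<in> ?A" "nb u (i + Suc j) \<in> ?A"
      using mem[OF Suc_lessD[OF Suc.prems]] mem[OF Suc.prems] .
    then have "(nb u (i + j), nb u (i + Suc j)) \<in> E ?A"
      using adj_nb_next[of u "i + j"] by (simp add: E_iff)
    with Suc show ?case by (meson Suc_lessD rtrancl.rtrancl_into_rtrancl)
  qed simp
  then show ?thesis unfolding connected_pts_def by (blast intro: E_rtrancl_join)
qed

lemma nbset_eq_arc: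
  assumes "{j. j < 6 \<and> nb u j \<in> S} = cyc_int i k"
  shows "nbset S u = {nb u (i + j) | j. j < k}"
proof -
  have "nbset S u = nb u ` {j. j < 6 \<and> nb u j \<in> S}" by (auto simp: nbset_def)
  also have "\<dots> = (\<lambda>j. nb u (i + j)) ` {..<k}" unfolding assms cyc_int_image image_image nb_mod ..
  finally show ?thesis by auto
qed

lemma convex_corner_SCE:
  assumes corner: "convex_corner S u" and sc: "simply_connected S"
  shows "SCE S u"
proof -
  obtain i k where u: "u \<in> S" and k: "1 \<le> k" "k \<le> 3"
    and arc: "{j. j < 6 \<and> nb u j \<in> S} = cyc_int i k"
    using corner by (auto simp: convex_corner_def)
  define B where "B = cyc_int ((i + k) mod 6) (6 - k)"
  have out: "out_dirs S u = B"
    using arc cyc_int_complement[of k i] k unfolding B_def out_dirs_def by auto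
  have "(i + k) mod 6 \<in> B" unfolding B_def using cyc_int_mem[of 0 "6 - k" "(i + k) mod 6"] k by simp
  then have j0: "(i + k) mod 6 < 6" "nb u ((i + k) mod 6) \<notin> S" using out by (auto simp: out_dirs_def)
  then have bp: "boundary_point S u" using u unfolding boundary_point_def by blast
  have "u \<in> outer_boundary S" using j0 u sc unfolding outer_boundary_def simply_connected_def by blast
  moreover have "redundant S u"
    using bp connected_arc nbset_eq_arc[OF arc] by (simp add: redundant_def nbset_def[symmetric])
  moreover have "is_cyc_int B"
    using j0(1) k unfolding is_cyc_int_def B_def by (intro exI[of _ "(i + k) mod 6"] conjI exI[of _ "6 - k"]) auto
  then have "local_boundary S u B" using bp out by (auto simp: local_boundary_def)
  moreover have "bcount B > 0" using k card_cyc_int[of "6 - k"] by (simp add: bcount_def B_def)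
  ultimately show ?thesis by (auto simp: SCE_def erodable_def)
qed

lemma SCE_three_outside:
  assumes "SCE S v"
  obtains i where "nb v i \<notin> S" "nb v (i + 1) \<notin> S" "nb v (i + 2) \<notin> S"
proof -
  obtain B where B: "local_boundary S v B" "bcount B > 0" using assms by (auto simp: SCE_def)
  then obtain i k where ik: "B = cyc_int i k" "B \<subseteq> out_dirs S v"
    by (auto simp: local_boundary_def is_cyc_int_def)
  have "k \<ge> 3" using B(2) card_cyc_int_le[of i k] ik by (simp add: bcount_def)
  then have "(i + 0) mod 6 \<in> B" "(i + 1) mod 6 \<in> B" "(i + 2) mod 6 \<in> B"
    using ik(1) cyc_int_mem[of 0 k i] cyc_int_mem[of 1 k i] cyc_int_mem[of 2 k i] by auto
  then have "nb v (i mod 6) \<notin> S" "nb v ((i + 1) mod 6) \<notin> S" "nb v ((i + 2) mod 6) \<notin> S"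
    using ik(2) by (auto simp: out_dirs_def)
  then show ?thesis using that[of i] nb_mod by metis
qed

lemma convex_corner_or_pinch:
  assumes v: "v \<in> S" and some: "nb v j \<in> S"
    and within: "\<forall>j. nb v j \<in> S \<longrightarrow> nb v j \<in> {nb v i, nb v (i + 1), nb v (i + 2)}"
  shows "convex_corner S v \<or> nb v i \<in> S \<and> nb v (i + 2) \<in> S \<and> nb v (i + 1) \<notin> S"
proof -
  have dirs: "{j. j < 6 \<and> nb v j \<in> S} = {d \<in> {i mod 6, (i + 1) mod 6, (i + 2) mod 6}. nb v d \<in> S}"
  proof (intro set_eqI iffI)
    fix x assume x: "x \<in> {j. j < 6 \<and> nb v j \<in> S}"
    then have "x mod 6 \<in> {i mod 6, (i + 1) mod 6, (i + 2) mod 6}"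
      using within by (auto simp: nb_eq_nb_iff)
    with x show "x \<in> {d \<in> {i mod 6, (i + 1) mod 6, (i + 2) mod 6}. nb v d \<in> S}" by simp
  qed auto
  have corner: "convex_corner S v" if "{d \<in> {i mod 6, (i + 1) mod 6, (i + 2) mod 6}. nb v d \<in> S} = cyc_int a k"
    "1 \<le> k" "k \<le> 3" for a k
    using that v dirs unfolding convex_corner_def by auto
  define a b c where "a = nb v i" and "b = nb v (i + 1)" and "c = nb v (i + 2)"
  have "a \<in> S \<or> b \<in> S \<or> c \<in> S"
    using some within unfolding a_def b_def c_def by auto
  then consider "a \<in> S" "b \<notin> S" "c \<notin> S" | "a \<notin> S" "b \<in> S" "c \<notin> S" | "a \<notin> S" "b \<notin> S" "c \<in> S"
    | "a \<in> S" "b \<in> S" "c \<notin> S" | "a \<notin> S" "b \<in> S" "c \<in> S" | "a \<in> S" "b \<in> S" "c \<in> S"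
    | "a \<in> S" "b \<notin> S" "c \<in> S"
    by blast
  then show ?thesis unfolding a_def b_def c_def
  proof cases
    case 1 then show ?thesis by (intro disjI1 corner[of i 1]) (auto simp: cyc_int_small nb_mod)
  next
    case 2 then show ?thesis by (intro disjI1 corner[of "i + 1" 1]) (auto simp: cyc_int_small nb_mod)
  next
    case 3 then show ?thesis by (intro disjI1 corner[of "i + 2" 1]) (auto simp: cyc_int_small nb_mod)
  next
    case 4 then show ?thesis by (intro disjI1 corner[of i 2]) (auto simp: cyc_int_small nb_mod)
  next
    case 5 then show ?thesis by (intro disjI1 corner[of "i + 1" 2]) (auto simp: cyc_int_small nb_mod)
  next
    case 6 then show ?thesis by (intro disjI1 corner[of i 3]) (auto simp: cyc_int_small nb_mod)
  qed simp
qed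

section \<open>A discrete Jordan curve argument\<close>

fun crossings :: "(point \<Rightarrow> point \<Rightarrow> bool) \<Rightarrow> point list \<Rightarrow> nat" where
  "crossings R (x # y # ys) = (if R x y then 1 else 0) + crossings R (y # ys)"
| "crossings R _ = 0"

text \<open>The edge xy crosses the horizontal ray at height snd q + 1/2 that starts at the centre of
  the triangle q, nb q 0, nb q 5 and runs in direction 0; crosses_left q is the analogous ray
  starting at the centre of the triangle q, nb q 3, nb q 4 and running in direction 3.\<close>
definition crosses_right :: "point \<Rightarrow> point \<Rightarrow> point \<Rightarrow> bool" where
  "crosses_right q x y \<longleftrightarrow> (snd x = snd q \<and> fst x > fst q \<and> snd y = snd q + 1) \<or>
                            (snd y = snd q \<and> fst y > fst q \<and> snd x = snd q + 1)"

definition crosses_left :: "point \<Rightarrow> point \<Rightarrow> point \<Rightarrow> bool" where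
  "crosses_left q x y \<longleftrightarrow> (snd x = snd q \<and> fst x < fst q \<and> snd y = snd q + 1) \<or>
                           (snd y = snd q \<and> fst y < fst q \<and> snd x = snd q + 1)"

definition separates :: "point set \<Rightarrow> point \<Rightarrow> point \<Rightarrow> bool" where
  "separates D x y \<longleftrightarrow> (x \<in> D) \<noteq> (y \<in> D)"

definition closed_walk :: "point list \<Rightarrow> bool" where
  "closed_walk xs \<longleftrightarrow> xs \<noteq> [] \<and> hd xs = last xs \<and> successively adj xs"

lemma crossings_zero:
  "(\<And>x y. x \<in> set xs \<Longrightarrow> y \<in> set xs \<Longrightarrow> \<not> R x y) \<Longrightarrow> crossings R xs = 0"
  by (induction R xs rule: crossings.induct) auto

lemma crossings_loop:
  "xs \<noteq> [] \<Longrightarrow> crossings R (v # xs @ [v])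
     = (if R v (hd xs) then 1 else 0) + crossings R xs + (if R (last xs) v then 1 else 0)"
proof -
  have cons: "ys \<noteq> [] \<Longrightarrow> crossings R (x # ys) = (if R x (hd ys) then 1 else 0) + crossings R ys"
    for x ys by (cases ys) auto
  have snoc: "ys \<noteq> [] \<Longrightarrow> crossings R (ys @ [y]) = crossings R ys + (if R (last ys) y then 1 else 0)"
    for y ys by (induction R ys rule: crossings.induct) auto
  show "xs \<noteq> [] \<Longrightarrow> ?thesis" by (simp add: cons snoc)
qed

lemma crossings_sum_even:
  assumes "successively adj xs" "\<forall>x\<in>set xs. Q x"
    "\<And>x y. adj x y \<Longrightarrow> Q x \<Longrightarrow> Q y \<Longrightarrow> R3 x y \<longleftrightarrow> R1 x y \<noteq> R2 x y"
  shows "even (crossings R1 xs + crossings R2 xs + crossings R3 xs)"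
  using assms(1,2)
proof (induction xs rule: induct_list012)
  case (3 x y zs)
  then have "R3 x y \<longleftrightarrow> R1 x y \<noteq> R2 x y" by (intro assms(3)) auto
  with 3 show ?case by auto
qed simp_all

lemma crossings_separates_even: "closed_walk xs \<Longrightarrow> even (crossings (separates D) xs)"
proof -
  have "xs \<noteq> [] \<Longrightarrow> even (crossings (separates D) xs) \<longleftrightarrow> (hd xs \<in> D) = (last xs \<in> D)"
    by (induction "separates D" xs rule: crossings.induct) (auto simp: separates_def)
  then show "closed_walk xs \<Longrightarrow> ?thesis" by (simp add: closed_walk_def)
qed

lemma crossings_shift_0:
  assumes "adj x y" "q' = (fst q + 1, snd q)" "x \<noteq> q'" "y \<noteq> q'"
  shows "separates {} x y \<longleftrightarrow> crosses_right q x y \<noteq> crosses_right q' x y"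
proof -
  obtain c d a b where xq: "x = (c, d)" "q = (a, b)" by (cases x; cases q)
  show ?thesis using adj_cases[OF assms(1)] assms(2-4) unfolding xq
    by (elim disjE) (simp_all add: separates_def crosses_right_def prod_eq_iff; presburger)+
qed

lemma crossings_shift_5:
  assumes "adj x y" "q' = (fst q, snd q + 1)" "x \<noteq> q" "y \<noteq> q" "x \<noteq> q'" "y \<noteq> q'"
  shows "separates {p. snd p = snd q + 1 \<and> fst p \<ge> fst q} x y
    \<longleftrightarrow> crosses_right q x y \<noteq> crosses_right q' x y"
proof -
  obtain c d a b where xq: "x = (c, d)" "q = (a, b)" by (cases x; cases q)
  show ?thesis using adj_cases[OF assms(1)] assms(2-6) unfolding xq
    by (elim disjE) (simp_all add: separates_def crosses_right_def prod_eq_iff; presburger)+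
qed

lemma crossings_shift_4:
  assumes "adj x y" "q' = (fst q - 1, snd q + 1)" "x \<noteq> q" "y \<noteq> q" "x \<noteq> q'" "y \<noteq> q'"
  shows "separates {p. snd p = snd q + 1 \<and> fst p \<ge> fst q - 1} x y
    \<longleftrightarrow> crosses_right q x y \<noteq> crosses_right q' x y"
proof -
  obtain c d a b where xq: "x = (c, d)" "q = (a, b)" by (cases x; cases q)
  show ?thesis using adj_cases[OF assms(1)] assms(2-6) unfolding xq
    by (elim disjE) (simp_all add: separates_def crosses_right_def prod_eq_iff; presburger)+
qed

lemma crossings_right_left:
  assumes "adj x y" "x \<noteq> q" "y \<noteq> q"
  shows "separates {p. snd p \<le> snd q} x y \<longleftrightarrow> crosses_right q x y \<noteq> crosses_left q x y"
proof -
  obtain c d a b where xq: "x = (c, d)" "q = (a, b)" by (cases x; cases q)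
  show ?thesis using adj_cases[OF assms(1)] assms(2-3) unfolding xq
    by (elim disjE) (simp_all add: separates_def crosses_right_def crosses_left_def prod_eq_iff; presburger)+
qed

text \<open>Moving the start of the ray to a neighbouring point changes whether an edge crosses it
  exactly when the edge leaves a fixed set, which a closed walk does an even number of times.\<close>
lemma crossings_parity_adj:
  assumes cw: "closed_walk xs" and q: "q \<notin> set xs" "q' \<notin> set xs" and "adj q q'"
  shows "even (crossings (crosses_right q) xs + crossings (crosses_right q') xs)"
proof -
  have basic: "even (crossings (crosses_right q) xs + crossings (crosses_right q') xs)"
    if nq: "q \<notin> set xs" "q' \<notin> set xs"
      and dir: "q' = (fst q + 1, snd q) \<or> q' = (fst q - 1, snd q + 1) \<or> q' = (fst q, snd q + 1)"
    for q q'
  proof -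
    from dir consider "q' = (fst q + 1, snd q)" | "q' = (fst q - 1, snd q + 1)" | "q' = (fst q, snd q + 1)"
      by blast
    then obtain D where "\<And>x y. adj x y \<Longrightarrow> x \<noteq> q \<and> x \<noteq> q' \<Longrightarrow> y \<noteq> q \<and> y \<noteq> q' \<Longrightarrow>
        separates D x y \<longleftrightarrow> crosses_right q x y \<noteq> crosses_right q' x y"
    proof cases
      case 1 show ?thesis by (rule that, rule crossings_shift_0[OF _ 1]) auto
    next
      case 2 show ?thesis by (rule that, rule crossings_shift_4[OF _ 2]) auto
    next
      case 3 show ?thesis by (rule that, rule crossings_shift_5[OF _ 3]) auto
    qed
    then have "even (crossings (crosses_right q) xs + crossings (crosses_right q') xs
        + crossings (separates D) xs)"
      using cw nq unfolding closed_walk_def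
      by (intro crossings_sum_even[where Q = "\<lambda>x. x \<noteq> q \<and> x \<noteq> q'"]) auto
    then show ?thesis using crossings_separates_even[OF cw, of D] by simp
  qed
  have "(q' = (fst q + 1, snd q) \<or> q' = (fst q - 1, snd q + 1) \<or> q' = (fst q, snd q + 1)) \<or>
        (q = (fst q' + 1, snd q') \<or> q = (fst q' - 1, snd q' + 1) \<or> q = (fst q', snd q' + 1))"
    using adj_cases[OF \<open>adj q q'\<close>] by (auto simp: prod_eq_iff)
  then show ?thesis
  proof
    assume "q = (fst q' + 1, snd q') \<or> q = (fst q' - 1, snd q' + 1) \<or> q = (fst q', snd q' + 1)"
    with basic[OF q(2,1)] show ?thesis by (simp add: add.commute)
  qed (rule basic[OF q])
qed

lemma crossings_right_left_parity:
  assumes cw: "closed_walk xs" and q: "q \<notin> set xs"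
  shows "even (crossings (crosses_right q) xs + crossings (crosses_left q) xs)"
proof -
  have "even (crossings (crosses_right q) xs + crossings (crosses_left q) xs
      + crossings (separates {p. snd p \<le> snd q}) xs)"
    using cw q crossings_right_left unfolding closed_walk_def
    by (intro crossings_sum_even[where Q = "\<lambda>x. x \<noteq> q"]) auto
  then show ?thesis using crossings_separates_even[OF cw] by simp
qed

lemma odd_crossings_bounded:
  assumes cw: "closed_walk xs" and p: "p \<notin> set xs" and odd: "odd (crossings (crosses_right p) xs)"
  shows "p \<in> {Min (fst ` set xs) .. Max (fst ` set xs)} \<times> snd ` set xs"
proof -
  have ex: "\<exists>x\<in>set xs. P x" if "\<And>x y. \<not> P x \<Longrightarrow> \<not> P y \<Longrightarrow> \<not> R x y"
    and "odd (crossings R xs)" for P R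
  proof (rule ccontr)
    assume "\<not> (\<exists>x\<in>set xs. P x)"
    then have "crossings R xs = 0" using that(1) by (intro crossings_zero) metis
    with that(2) show False by simp
  qed
  obtain x1 where "x1 \<in> set xs" "snd x1 = snd p"
    using ex[OF _ odd, of "\<lambda>x. snd x = snd p"] by (auto simp: crosses_right_def)
  then have "snd p \<in> snd ` set xs" by (metis image_eqI)
  obtain x2 where x2: "x2 \<in> set xs" "fst p < fst x2"
    using ex[OF _ odd, of "\<lambda>x. fst p < fst x"] by (auto simp: crosses_right_def)
  have "fst x2 \<le> Max (fst ` set xs)" using x2(1) by simp
  with x2(2) have "fst p \<le> Max (fst ` set xs)" by linarith
  have "odd (crossings (crosses_left p) xs)"
    using crossings_right_left_parity[OF cw p] odd by simp
  then obtain x3 where x3: "x3 \<in> set xs" "fst x3 \<le> fst p"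
    using ex[of "\<lambda>x. fst x \<le> fst p" "crosses_left p"] by (auto simp: crosses_left_def)
  have "Min (fst ` set xs) \<le> fst x3" using x3(1) by simp
  with x3(2) have "Min (fst ` set xs) \<le> fst p" by linarith
  with \<open>snd p \<in> snd ` set xs\<close> \<open>fst p \<le> Max (fst ` set xs)\<close> show ?thesis
    by (simp add: mem_Times_iff)
qed

lemma odd_crossings_not_outer_face:
  assumes cw: "closed_walk xs" and sub: "set xs \<subseteq> S" and w: "w \<notin> S"
    and odd: "odd (crossings (crosses_right w) xs)"
  shows "\<not> outer_face S w"
proof -
  have reach: "odd (crossings (crosses_right p) xs) \<and> p \<notin> set xs" if "(w, p) \<in> (E (- S))\<^sup>*" for p
    using that
  proof (induction rule: rtrancl_induct)
    case (step p p')
    then have "p' \<notin> set xs" "adj p p'" using sub by (auto simp: E_iff)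
    with step have "even (crossings (crosses_right p) xs + crossings (crosses_right p') xs)"
      using crossings_parity_adj[OF cw] by blast
    with step \<open>p' \<notin> set xs\<close> show ?case by simp
  qed (use odd w sub in auto)
  have "component (- S) w \<subseteq> {Min (fst ` set xs) .. Max (fst ` set xs)} \<times> snd ` set xs"
  proof
    fix p assume "p \<in> component (- S) w"
    then have "(w, p) \<in> (E (- S))\<^sup>*" by (simp add: component_def)
    with reach show "p \<in> {Min (fst ` set xs) .. Max (fst ` set xs)} \<times> snd ` set xs"
      by (intro odd_crossings_bounded[OF cw]) auto
  qed
  then have "finite (component (- S) w)" by (rule finite_subset) simp
  then show ?thesis by (simp add: outer_face_component)
qed

section \<open>Existence of convex corners\<close>

definition two_convex_corners :: "point set \<Rightarrow> bool" where
  "two_convex_corners S \<longleftrightarrow> (\<exists>u u'. u \<noteq> u' \<and> convex_corner S u \<and> convex_corner S u')"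

lemma closed_walk_loop:
  "xs \<noteq> [] \<Longrightarrow> successively adj xs \<Longrightarrow> adj v (hd xs) \<Longrightarrow> adj (last xs) v \<Longrightarrow>
    closed_walk (v # xs @ [v])"
  by (auto simp: closed_walk_def successively_append_iff successively_Cons)

lemma walk_around_point:
  assumes "(x, y) \<in> (E (S - {v}))\<^sup>*" "x \<in> S - {v}" "adj v x" "adj v y"
  obtains xs where "closed_walk (v # xs @ [v])" "xs \<noteq> []" "hd xs = x" "last xs = y" "set xs \<subseteq> S - {v}"
proof -
  obtain xs where "xs \<noteq> []" "hd xs = x" "last xs = y" "successively adj xs" "set xs \<subseteq> S - {v}"
    using walk_of_E_rtrancl[OF assms(1,2)] by blast
  with assms(3,4) show ?thesis by (intro that closed_walk_loop) (auto intro: adj_sym)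
qed

text \<open>A walk from nb v 2 to nb v 4 avoiding v closes, through v, to a walk that crosses the
  ray from nb v 3 only at the edge (nb v 4, v), since no other point of the row of v lies to
  the right of nb v 3.\<close>
lemma max_pinch_separates:
  assumes sc: "simply_connected S" and v: "v \<in> S" and max: "\<forall>x\<in>S. xcoord2 x \<le> xcoord2 v"
    and x2: "nb v 2 \<in> S" and w: "nb v 3 \<notin> S"
  shows "(nb v 2, nb v 4) \<notin> (E (S - {v}))\<^sup>*"
proof
  assume "(nb v 2, nb v 4) \<in> (E (S - {v}))\<^sup>*"
  moreover have "nb v 2 \<in> S - {v}" using x2 nb_neq_self by auto
  ultimately obtain xs where cw: "closed_walk (v # xs @ [v])" and xs: "xs \<noteq> []" "hd xs = nb v 2"
    "last xs = nb v 4" "set xs \<subseteq> S - {v}"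
    by (rule walk_around_point[OF _ _ adj_nb adj_nb])
  have "\<not> (snd z = snd v \<and> fst v \<le> fst z)" if "z \<in> set xs" for z
    using that xs(4) max by (force simp: xcoord2_def prod_eq_iff)
  then have "crossings (crosses_right (nb v 3)) xs = 0"
    by (intro crossings_zero) (force simp: crosses_right_def nb_coords)
  then have "odd (crossings (crosses_right (nb v 3)) (v # xs @ [v]))"
    using xs by (simp add: crossings_loop crosses_right_def nb_coords)
  then have "\<not> outer_face S (nb v 3)" using odd_crossings_not_outer_face[OF cw _ w] xs v by auto
  with sc w show False unfolding simply_connected_def by blast
qed

lemma min_pinch_separates:
  assumes sc: "simply_connected S" and v: "v \<in> S" and min: "\<forall>x\<in>S. xcoord2 v \<le> xcoord2 x"
    and x5: "nb v 5 \<in> S" and w: "nb v 0 \<notin> S"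
  shows "(nb v 5, nb v 1) \<notin> (E (S - {v}))\<^sup>*"
proof
  assume "(nb v 5, nb v 1) \<in> (E (S - {v}))\<^sup>*"
  moreover have "nb v 5 \<in> S - {v}" using x5 nb_neq_self by auto
  ultimately obtain xs where cw: "closed_walk (v # xs @ [v])" and xs: "xs \<noteq> []" "hd xs = nb v 5"
    "last xs = nb v 1" "set xs \<subseteq> S - {v}"
    by (rule walk_around_point[OF _ _ adj_nb adj_nb])
  have "\<not> (snd z = snd v \<and> fst z \<le> fst v)" if "z \<in> set xs" for z
    using that xs(4) min by (force simp: xcoord2_def prod_eq_iff)
  then have "crossings (crosses_left (nb v 0)) xs = 0"
    by (intro crossings_zero) (force simp: crosses_left_def nb_coords)
  then have "odd (crossings (crosses_left (nb v 0)) (v # xs @ [v]))"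
    using xs by (simp add: crossings_loop crosses_left_def nb_coords)
  moreover have "nb v 0 \<notin> set (v # xs @ [v])" using xs(4) v w by auto
  ultimately have "odd (crossings (crosses_right (nb v 0)) (v # xs @ [v]))"
    using crossings_right_left_parity[OF cw] by (metis even_add)
  then have "\<not> outer_face S (nb v 0)" using odd_crossings_not_outer_face[OF cw _ w] xs v by auto
  with sc w show False unfolding simply_connected_def by blast
qed

lemma connected_insert_component:
  assumes "adj v x"
  shows "connected_pts (insert v (component A x))"
proof -
  let ?B = "insert v (component A x)"
  have "(x, z) \<in> (E ?B)\<^sup>*" if "z \<in> ?B" for z
  proof (cases "z = v")
    case True
    have "x \<in> ?B" by (simp add: component_def)
    with True assms show ?thesis by (intro E_rtrancl_edge) (auto intro: adj_sym)
  next
    case False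
    with that have "(x, z) \<in> (E A)\<^sup>*" by (simp add: component_def)
    then have "(x, z) \<in> (E (component A x))\<^sup>*" by (rule E_rtrancl_component)
    then show ?thesis by (rule E_rtrancl_mono[rotated]) auto
  qed
  then show ?thesis unfolding connected_pts_def by (meson E_rtrancl_sym rtrancl_trans)
qed

lemma convex_corner_of_component:
  assumes v: "v \<in> S" and x: "x \<in> S - {v}" and u: "u \<in> component (S - {v}) x"
    and corner: "convex_corner (insert v (component (S - {v}) x)) u"
  shows "convex_corner S u"
proof -
  let ?C = "component (S - {v}) x"
  have C: "?C \<subseteq> S - {v}" using component_subset[OF x] .
  have "nb u j \<in> S \<longleftrightarrow> nb u j \<in> insert v ?C" for j
  proof
    assume nS: "nb u j \<in> S"
    show "nb u j \<in> insert v ?C"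
    proof (cases "nb u j = v")
      case False
      with nS u C have "(u, nb u j) \<in> E (S - {v})" by (auto simp: E_iff adj_nb)
      with u have "(x, nb u j) \<in> (E (S - {v}))\<^sup>*"
        unfolding component_def by (blast intro: rtrancl.rtrancl_into_rtrancl)
      then show ?thesis by (simp add: component_def)
    qed simp
  qed (use v C in auto)
  with corner u C show ?thesis by (auto simp: convex_corner_def)
qed

lemma pinch_side_simply_connected:
  assumes con: "connected_pts S" and sc: "simply_connected S" and v: "v \<in> S"
    and x: "x \<in> S" "adj v x" and y: "y \<in> S" "adj v y"
    and only: "\<forall>n\<in>S. adj v n \<longrightarrow> n = x \<or> n = y"
    and w: "w \<notin> S" "adj y w"
    and nc: "(x, y) \<notin> (E (S - {v}))\<^sup>*"
  shows "simply_connected (insert v (component (S - {v}) x))"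
  unfolding simply_connected_def
proof (intro allI impI)
  let ?A = "component (S - {v}) x" and ?B = "component (S - {v}) y"
  have "x \<noteq> v" "y \<noteq> v" using adj_irrefl[of v] x(2) y(2) by auto
  with x y have xT: "x \<in> S - {v}" and yT: "y \<in> S - {v}" by simp_all
  have sub: "insert v ?A \<subseteq> S" using component_subset[OF xT] v by auto
  have "z \<notin> ?A" if "z \<in> ?B" for z
    using that nc E_rtrancl_join[of x z _ y] unfolding component_def by blast
  moreover have "v \<notin> ?B" using component_subset[OF yT] by blast
  ultimately have disj: "?B \<inter> insert v ?A = {}" by blast
  fix p assume p: "p \<notin> insert v ?A"
  show "outer_face (insert v ?A) p"
  proof (cases "p \<in> S")
    case False
    with sc sub show ?thesis unfolding simply_connected_def by (blast intro: outer_face_antimono)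
  next
    case True
    with p v have pT: "p \<in> S - {v}" by auto
    have "(p, v) \<in> (E S)\<^sup>*" using con True v by (simp add: connected_pts_def)
    from reach_avoiding[OF this pT] obtain n where n: "n \<in> S - {v}" "adj v n" "(p, n) \<in> (E (S - {v}))\<^sup>*"
      using E_rtrancl_in[OF _ pT] by blast
    have "n \<noteq> x" using p E_rtrancl_sym[OF n(3)] by (auto simp: component_def)
    with n only have "n = y" by blast
    with E_rtrancl_sym[OF n(3)] have "(y, p) \<in> (E (S - {v}))\<^sup>*" by simp
    then have "(y, p) \<in> (E ?B)\<^sup>*" by (rule E_rtrancl_component)
    then have yp: "(y, p) \<in> (E (- insert v ?A))\<^sup>*" by (rule E_rtrancl_mono[rotated]) (use disj in auto)
    have yw: "(y, w) \<in> (E (- insert v ?A))\<^sup>*"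
      using yT disj w sub by (intro E_rtrancl_edge) (auto simp: component_def)
    have "outer_face S w" using sc w unfolding simply_connected_def by blast
    from sub this p show ?thesis by (rule outer_face_via) (rule rtrancl_trans[OF E_rtrancl_sym[OF yp] yw])
  qed
qed

text \<open>Each side of a pinch point v, together with v, is a smaller simply connected shape; one
  of its two convex corners differs from v and is a convex corner of S.\<close>
lemma convex_corner_in_pinch_side:
  assumes IH: "\<And>T. T \<subset> S \<Longrightarrow> connected_pts T \<Longrightarrow> simply_connected T \<Longrightarrow> 2 \<le> card T \<Longrightarrow>
      two_convex_corners T"
    and fin: "finite S" and con: "connected_pts S" and sc: "simply_connected S" and v: "v \<in> S"
    and x: "x \<in> S" "adj v x" and y: "y \<in> S" "adj v y"
    and only: "\<forall>n\<in>S. adj v n \<longrightarrow> n = x \<or> n = y"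
    and w: "w \<notin> S" "adj y w"
    and nc: "(x, y) \<notin> (E (S - {v}))\<^sup>*"
  obtains u where "u \<in> component (S - {v}) x" "convex_corner S u"
proof -
  let ?A = "component (S - {v}) x"
  have "x \<noteq> v" "y \<noteq> v" using adj_irrefl[of v] x(2) y(2) by auto
  with x have xT: "x \<in> S - {v}" by simp
  have "insert v ?A \<subseteq> S" using component_subset[OF xT] v by auto
  moreover have "y \<notin> insert v ?A" using nc \<open>y \<noteq> v\<close> by (simp add: component_def)
  ultimately have sub: "insert v ?A \<subset> S" using y by blast
  have "{v, x} \<subseteq> insert v ?A" by (simp add: component_def)
  moreover have "finite (insert v ?A)" using rev_finite_subset[OF fin psubset_imp_subset[OF sub]] .
  ultimately have "card {v, x} \<le> card (insert v ?A)" by (rule card_mono[rotated])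
  with \<open>x \<noteq> v\<close> have "2 \<le> card (insert v ?A)" by simp
  with IH[OF sub connected_insert_component[OF x(2)] pinch_side_simply_connected[OF con sc v x y only w nc]]
  obtain u u' where "u \<noteq> u'" "convex_corner (insert v ?A) u" "convex_corner (insert v ?A) u'"
    unfolding two_convex_corners_def by blast
  then have "\<exists>u\<in>?A. convex_corner (insert v ?A) u" unfolding convex_corner_def by blast
  then show ?thesis using convex_corner_of_component[OF v xT] that by blast
qed

lemma two_convex_corners_of_pinch:
  assumes IH: "\<And>T. T \<subset> S \<Longrightarrow> connected_pts T \<Longrightarrow> simply_connected T \<Longrightarrow> 2 \<le> card T \<Longrightarrow>
      two_convex_corners T"
    and fin: "finite S" and con: "connected_pts S" and sc: "simply_connected S" and v: "v \<in> S"
    and x: "x \<in> S" "adj v x" and y: "y \<in> S" "adj v y"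
    and only: "\<forall>n\<in>S. adj v n \<longrightarrow> n = x \<or> n = y"
    and w: "w \<notin> S" "adj x w" "adj y w"
    and nc: "(x, y) \<notin> (E (S - {v}))\<^sup>*"
  shows "two_convex_corners S"
proof -
  obtain u where u: "u \<in> component (S - {v}) x" "convex_corner S u"
    using convex_corner_in_pinch_side[OF IH fin con sc v x y only w(1,3) nc] .
  have "(y, x) \<notin> (E (S - {v}))\<^sup>*" using nc E_rtrancl_sym[of y x] by blast
  moreover have "\<forall>n\<in>S. adj v n \<longrightarrow> n = y \<or> n = x" using only by blast
  ultimately obtain u' where u': "u' \<in> component (S - {v}) y" "convex_corner S u'"
    using convex_corner_in_pinch_side[OF IH fin con sc v y x _ w(1,2)] by blast
  have "u \<noteq> u'"
  proof
    assume "u = u'"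
    with u(1) u'(1) have "(x, u) \<in> (E (S - {v}))\<^sup>*" "(y, u) \<in> (E (S - {v}))\<^sup>*"
      by (simp_all add: component_def)
    with nc show False by (blast dest: E_rtrancl_join)
  qed
  with u u' show ?thesis unfolding two_convex_corners_def by blast
qed

lemma max_point_convex_corner_or_pinch:
  assumes IH: "\<And>T. T \<subset> S \<Longrightarrow> connected_pts T \<Longrightarrow> simply_connected T \<Longrightarrow> 2 \<le> card T \<Longrightarrow>
      two_convex_corners T"
    and fin: "finite S" and con: "connected_pts S" and sc: "simply_connected S"
    and v: "v \<in> S" and max: "\<forall>x\<in>S. xcoord2 x \<le> xcoord2 v" and v_nb: "nb v j \<in> S"
  shows "convex_corner S v \<or> two_convex_corners S"
proof -
  have within: "\<forall>k. nb v k \<in> S \<longrightarrow> nb v k \<in> {nb v 2, nb v (2 + 1), nb v (2 + 2)}"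
    using nb_if_xcoord2_le max by simp
  from convex_corner_or_pinch[OF v v_nb within] show ?thesis
  proof (elim disjE)
    assume pinch: "nb v 2 \<in> S \<and> nb v (2 + 2) \<in> S \<and> nb v (2 + 1) \<notin> S"
    have only: "\<forall>n\<in>S. adj v n \<longrightarrow> n = nb v 2 \<or> n = nb v 4"
    proof (intro ballI impI)
      fix n assume "n \<in> S" "adj v n"
      then obtain k where "n = nb v k" by (auto simp: adj_def)
      with within \<open>n \<in> S\<close> pinch show "n = nb v 2 \<or> n = nb v 4" by auto
    qed
    from pinch have x2: "nb v 2 \<in> S" and x4: "nb v 4 \<in> S" and w: "nb v 3 \<notin> S" by simp_all
    have "adj (nb v 2) (nb v 3)" "adj (nb v 4) (nb v 3)"
      using adj_nb_next[of v 2] adj_sym[OF adj_nb_next[of v 3]] by simp_all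
    with x2 x4 w only max_pinch_separates[OF sc v max x2 w] have "two_convex_corners S"
      by (intro two_convex_corners_of_pinch[OF IH fin con sc v, where x = "nb v 2" and y = "nb v 4"
            and w = "nb v 3"]) (simp_all add: adj_nb)
    then show ?thesis ..
  qed blast
qed

lemma min_point_convex_corner_or_pinch:
  assumes IH: "\<And>T. T \<subset> S \<Longrightarrow> connected_pts T \<Longrightarrow> simply_connected T \<Longrightarrow> 2 \<le> card T \<Longrightarrow>
      two_convex_corners T"
    and fin: "finite S" and con: "connected_pts S" and sc: "simply_connected S"
    and v: "v \<in> S" and min: "\<forall>x\<in>S. xcoord2 v \<le> xcoord2 x" and v_nb: "nb v j \<in> S"
  shows "convex_corner S v \<or> two_convex_corners S"
proof -
  have nb67: "nb v 6 = nb v 0" "nb v 7 = nb v 1" using nb_mod[of v 6] nb_mod[of v 7] by simp_all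
  have within: "\<forall>k. nb v k \<in> S \<longrightarrow> nb v k \<in> {nb v 5, nb v (5 + 1), nb v (5 + 2)}"
    using nb_if_xcoord2_ge min nb67 by simp
  from convex_corner_or_pinch[OF v v_nb within] show ?thesis
  proof (elim disjE)
    assume "nb v 5 \<in> S \<and> nb v (5 + 2) \<in> S \<and> nb v (5 + 1) \<notin> S"
    then have pinch: "nb v 5 \<in> S" "nb v 1 \<in> S" "nb v 0 \<notin> S" using nb67 by simp_all
    have only: "\<forall>n\<in>S. adj v n \<longrightarrow> n = nb v 5 \<or> n = nb v 1"
    proof (intro ballI impI)
      fix n assume "n \<in> S" "adj v n"
      then obtain k where "n = nb v k" by (auto simp: adj_def)
      with within nb67 \<open>n \<in> S\<close> pinch show "n = nb v 5 \<or> n = nb v 1" by auto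
    qed
    have "adj (nb v 5) (nb v 0)" "adj (nb v 1) (nb v 0)"
      using adj_nb_next[of v 5] adj_sym[OF adj_nb_next[of v 0]] nb67 by simp_all
    with pinch only min_pinch_separates[OF sc v min pinch(1,3)] have "two_convex_corners S"
      by (intro two_convex_corners_of_pinch[OF IH fin con sc v, where x = "nb v 5" and y = "nb v 1"
            and w = "nb v 0"]) (simp_all add: adj_nb)
    then show ?thesis ..
  qed blast
qed

lemma two_convex_corners_if_two_points:
  assumes "finite S" "connected_pts S" "simply_connected S" "2 \<le> card S"
  shows "two_convex_corners S"
  using assms
proof (induction S rule: finite_psubset_induct)
  case (psubset S)
  have IH: "two_convex_corners T"
    if "T \<subset> S" "connected_pts T" "simply_connected T" "2 \<le> card T" for T
    using psubset.IH that psubset.hyps by (meson finite_subset psubset_imp_subset)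
  have ne: "S \<noteq> {}" using psubset.prems(3) by auto
  obtain vM where "is_arg_min (\<lambda>x. - xcoord2 x) (\<lambda>x. x \<in> S) vM"
    using ex_is_arg_min_if_finite[OF psubset.hyps ne] by blast
  then have vM: "vM \<in> S" "\<forall>x\<in>S. xcoord2 x \<le> xcoord2 vM" unfolding is_arg_min_linorder by auto
  obtain vm where "is_arg_min xcoord2 (\<lambda>x. x \<in> S) vm"
    using ex_is_arg_min_if_finite[OF psubset.hyps ne] by blast
  then have vm: "vm \<in> S" "\<forall>x\<in>S. xcoord2 vm \<le> xcoord2 x" unfolding is_arg_min_linorder by auto
  have has_nb: "\<exists>j. nb v j \<in> S" if "v \<in> S" for v
  proof -
    have "S \<noteq> {v}" using psubset.prems(3) by auto
    with that obtain w where "w \<in> S" "w \<noteq> v" by blast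
    then show ?thesis using connected_has_nb[OF psubset.prems(1) that] by blast
  qed
  then obtain j where j: "nb vM j \<in> S" using vM(1) by blast
  have "vM \<noteq> vm" using vM vm j xcoord2_nb_neq[of vM j] by force
  with max_point_convex_corner_or_pinch[OF IH psubset.hyps psubset.prems(1,2) vM j]
    min_point_convex_corner_or_pinch[OF IH psubset.hyps psubset.prems(1,2) vm] has_nb[OF vm(1)]
  show ?case unfolding two_convex_corners_def by blast
qed

section \<open>The area of a shape\<close>

lemma subset_area: "S \<subseteq> area S"
  by (auto simp: area_def outer_face_def)

lemma nb_hole_point_in_area:
  assumes "x \<in> area S" "x \<notin> S"
  shows "nb x i \<in> area S"
proof (cases "nb x i \<in> S")
  case False
  with assms(2) have "(x, nb x i) \<in> (E (- S))\<^sup>*" by (intro E_rtrancl_edge) (auto simp: adj_nb)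
  then have "component (- S) (nb x i) = component (- S) x" by (rule component_eq)
  with assms False show ?thesis by (auto simp: area_def outer_face_component)
qed (use subset_area in auto)

lemma finite_area:
  assumes fin: "finite S"
  shows "finite (area S)"
proof -
  define M where "M = Max (insert 0 ((\<lambda>p. \<bar>fst p\<bar> + \<bar>snd p\<bar>) ` S))"
  have M: "\<bar>fst x\<bar> + \<bar>snd x\<bar> \<le> M" if "x \<in> S" for x
    using fin that by (auto simp: M_def)
  have ray_hits: "\<exists>k. ray p i k \<in> S" if "p \<in> area S" for p i
    using outer_face_if_ray_avoids[of p i S] that by (auto simp: area_def)
  have "area S \<subseteq> {-2 * M..2 * M} \<times> {-M..M}"
  proof
    fix p assume p: "p \<in> area S"
    obtain k0 k2 k3 k5 where "ray p 0 k0 \<in> S" "ray p 2 k2 \<in> S" "ray p 3 k3 \<in> S" "ray p 5 k5 \<in> S"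
      using ray_hits[OF p, of 0] ray_hits[OF p, of 2] ray_hits[OF p, of 3] ray_hits[OF p, of 5] by blast
    then have "\<bar>fst p + int k0\<bar> + \<bar>snd p\<bar> \<le> M" "\<bar>fst p\<bar> + \<bar>snd p - int k2\<bar> \<le> M"
      "\<bar>fst p - int k3\<bar> + \<bar>snd p\<bar> \<le> M" "\<bar>fst p\<bar> + \<bar>snd p + int k5\<bar> \<le> M"
      using M by (force simp: ray_coords)+
    then show "p \<in> {-2 * M..2 * M} \<times> {-M..M}" by (cases p) auto
  qed
  then show ?thesis by (rule finite_subset) simp
qed

lemma simply_connected_area: "simply_connected (area S)"
  unfolding simply_connected_def
proof (intro allI impI)
  fix p assume p: "p \<notin> area S"
  then have outer: "outer_face S p" by (simp add: area_def)
  have "component (- S) p \<subseteq> - area S"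
  proof
    fix q assume "q \<in> component (- S) p"
    then have q: "(p, q) \<in> (E (- S))\<^sup>*" by (simp add: component_def)
    then have "component (- S) q = component (- S) p" by (rule component_eq)
    moreover have "q \<notin> S" using E_rtrancl_in[OF q] outer by (auto simp: outer_face_def)
    ultimately show "q \<in> - area S" using outer by (simp add: area_def outer_face_component)
  qed
  then have "component (- S) p \<subseteq> component (- area S) p"
  proof (intro subsetI)
    fix q assume "q \<in> component (- S) p"
    then have "(p, q) \<in> (E (- S))\<^sup>*" by (simp add: component_def)
    then have "(p, q) \<in> (E (component (- S) p))\<^sup>*" by (rule E_rtrancl_component)
    then have "(p, q) \<in> (E (- area S))\<^sup>*" by (rule E_rtrancl_mono[rotated]) fact
    then show "q \<in> component (- area S) p" by (simp add: component_def)
  qed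
  with outer p show "outer_face (area S) p" by (auto simp: outer_face_component dest: finite_subset)
qed

text \<open>From a hole point go to the rightmost point of its (finite) component of the complement;
  its right neighbour lies in S.\<close>
lemma area_reaches_shape:
  assumes h: "h \<in> area S"
  shows "\<exists>s\<in>S. (h, s) \<in> (E (area S))\<^sup>*"
proof (cases "h \<in> S")
  case False
  let ?C = "component (- S) h"
  have finC: "finite ?C" using h False by (simp add: area_def outer_face_component)
  have Carea: "?C \<subseteq> area S"
  proof
    fix q assume "q \<in> ?C"
    then have "component (- S) q = ?C" by (intro component_eq) (simp add: component_def)
    with finC show "q \<in> area S" by (simp add: area_def outer_face_component)
  qed
  have "h \<in> ?C" by (simp add: component_def)
  then obtain z where "is_arg_min (\<lambda>x. - xcoord2 x) (\<lambda>x. x \<in> ?C) z"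
    using ex_is_arg_min_if_finite[OF finC] by blast
  then have z: "z \<in> ?C" "\<forall>y\<in>?C. xcoord2 y \<le> xcoord2 z" unfolding is_arg_min_linorder by auto
  have hz: "(h, z) \<in> (E (- S))\<^sup>*" using z(1) by (simp add: component_def)
  have "nb z 0 \<in> S"
  proof (rule ccontr)
    assume "nb z 0 \<notin> S"
    moreover have "z \<notin> S" using E_rtrancl_in[OF hz] False by auto
    ultimately have "(z, nb z 0) \<in> (E (- S))\<^sup>*" by (intro E_rtrancl_edge) (auto simp: adj_nb)
    with hz have "nb z 0 \<in> ?C" by (simp add: component_def)
    with z(2) show False using xcoord2_nb(1)[of z] by fastforce
  qed
  have "(h, z) \<in> (E ?C)\<^sup>*" using E_rtrancl_component[OF hz] .
  then have "(h, z) \<in> (E (area S))\<^sup>*" using E_rtrancl_mono[OF Carea] by blast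
  moreover have "(z, nb z 0) \<in> (E (area S))\<^sup>*"
    using Carea z(1) \<open>nb z 0 \<in> S\<close> subset_area by (intro E_rtrancl_edge) (auto simp: adj_nb)
  ultimately show ?thesis using \<open>nb z 0 \<in> S\<close> by (meson rtrancl_trans)
qed auto

lemma connected_area:
  assumes con: "connected_pts S"
  shows "connected_pts (area S)"
  unfolding connected_pts_def
proof (intro ballI)
  fix x y assume "x \<in> area S" "y \<in> area S"
  with area_reaches_shape[of x] area_reaches_shape[of y] obtain s1 s2
    where s: "s1 \<in> S" "(x, s1) \<in> (E (area S))\<^sup>*" "s2 \<in> S" "(y, s2) \<in> (E (area S))\<^sup>*"
    by blast
  then have "(s1, s2) \<in> (E (area S))\<^sup>*"
    using con E_rtrancl_mono[OF subset_area] by (auto simp: connected_pts_def)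
  with s show "(x, y) \<in> (E (area S))\<^sup>*" by (meson E_rtrancl_join rtrancl_trans)
qed

section \<open>Invariants of algorithm DLE\<close>

definition forget_point :: "('p \<Rightarrow> nat) \<Rightarrow> 'p config \<Rightarrow> point \<Rightarrow> 'p \<Rightarrow> nat \<Rightarrow> bool" where
  "forget_point off c v = (\<lambda>q j. elig c q j \<and> \<not> (adj (phead c q) v \<and> port_pt off q (phead c q) j = v))"

definition free_targets :: "'p set \<Rightarrow> 'p config \<Rightarrow> point \<Rightarrow> point set" where
  "free_targets P c v = {u. adj v u \<and> u \<in> Se c - {v} \<and> u \<notin> occupied P c}"

definition dle_idle :: "'p set \<Rightarrow> 'p config \<Rightarrow> 'p \<Rightarrow> bool" where
  "dle_idle P c p \<longleftrightarrow> fin c p \<or> contracted c p \<and> (if st c p = Undecided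
     then (\<exists>i<6. elig c p i) \<and> \<not> SCE (Se c) (phead c p)
     else (\<exists>q\<in>neighbours P c p. st c q = Undecided))"

lemma dle_succ_cases:
  assumes "c' \<in> dle_succ P off c p"
  obtains (idle) "c' = c" "dle_idle P c p"
  | (contract) "\<not> fin c p" "\<not> contracted c p" "c' = c\<lparr>ptail := (ptail c)(p := phead c p)\<rparr>"
  | (terminate) "\<not> fin c p" "contracted c p" "st c p \<noteq> Undecided" "c' = c\<lparr>fin := (fin c)(p := True)\<rparr>"
  | (leader) "\<not> fin c p" "contracted c p" "st c p = Undecided" "\<forall>i<6. \<not> elig c p i"
      "c' = c\<lparr>st := (st c)(p := Leader)\<rparr>"
  | (expand) u where "\<not> fin c p" "contracted c p" "st c p = Undecided" "\<exists>i<6. elig c p i"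
      "SCE (Se c) (phead c p)" "u \<in> free_targets P c (phead c p)"
      "c' = c\<lparr>Se := Se c - {phead c p},
         elig := (forget_point off c (phead c p))(p := (\<lambda>j. port_pt off p u j \<noteq> phead c p)),
         phead := (phead c)(p := u)\<rparr>"
  | (follower) "\<not> fin c p" "contracted c p" "st c p = Undecided" "\<exists>i<6. elig c p i"
      "SCE (Se c) (phead c p)" "free_targets P c (phead c p) = {}"
      "c' = c\<lparr>Se := Se c - {phead c p}, elig := forget_point off c (phead c p),
         st := (st c)(p := Follower)\<rparr>"
proof -
  consider "fin c p" | "\<not> fin c p" "\<not> contracted c p"
    | "\<not> fin c p" "contracted c p" "st c p \<noteq> Undecided" "\<forall>q\<in>neighbours P c p. st c q \<noteq> Undecided"
    | "\<not> fin c p" "contracted c p" "st c p \<noteq> Undecided" "\<not> (\<forall>q\<in>neighbours P c p. st c q \<noteq> Undecided)"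
    | "\<not> fin c p" "contracted c p" "st c p = Undecided" "\<forall>i<6. \<not> elig c p i"
    | "\<not> fin c p" "contracted c p" "st c p = Undecided" "\<not> (\<forall>i<6. \<not> elig c p i)"
        "\<not> SCE (Se c) (phead c p)"
    | "\<not> fin c p" "contracted c p" "st c p = Undecided" "\<not> (\<forall>i<6. \<not> elig c p i)"
        "SCE (Se c) (phead c p)" "free_targets P c (phead c p) = {}"
    | "\<not> fin c p" "contracted c p" "st c p = Undecided" "\<not> (\<forall>i<6. \<not> elig c p i)"
        "SCE (Se c) (phead c p)" "free_targets P c (phead c p) \<noteq> {}"
    by blast
  then show thesis
  proof cases
    case 1 with assms show thesis by (intro idle) (simp_all add: dle_succ_def dle_idle_def)
  next
    case 2 with assms show thesis by (intro contract) (simp_all add: dle_succ_def)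
  next
    case 3 with assms show thesis by (intro terminate) (simp_all add: dle_succ_def)
  next
    case 4 with assms show thesis by (intro idle) (simp_all add: dle_succ_def dle_idle_def)
  next
    case 5 with assms show thesis by (intro leader) (simp_all add: dle_succ_def)
  next
    case 6 with assms show thesis by (intro idle) (simp_all add: dle_succ_def dle_idle_def Let_def)
  next
    case 7 with assms show thesis
      by (intro follower) (auto simp: dle_succ_def Let_def forget_point_def free_targets_def split: if_splits)
  next
    case 8
    with assms obtain u where "u \<in> free_targets P c (phead c p)"
      "c' = c\<lparr>Se := Se c - {phead c p},
         elig := (forget_point off c (phead c p))(p := (\<lambda>j. port_pt off p u j \<noteq> phead c p)),
         phead := (phead c)(p := u)\<rparr>"
      by (auto simp: dle_succ_def Let_def forget_point_def free_targets_def split: if_splits)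
    with 8 show thesis by (intro expand[of u]) simp_all
  qed
qed

definition solid :: "point set \<Rightarrow> bool" where
  "solid S \<longleftrightarrow> finite S \<and> S \<noteq> {} \<and> connected_pts S \<and> simply_connected S"

definition inv_undecided :: "'p set \<Rightarrow> ('p \<Rightarrow> nat) \<Rightarrow> 'p config \<Rightarrow> bool" where
  "inv_undecided P off c \<longleftrightarrow> (\<forall>p\<in>P. st c p = Undecided \<longrightarrow>
     phead c p \<in> Se c \<and> (\<forall>i<6. elig c p i \<longleftrightarrow> port_pt off p (phead c p) i \<in> Se c))"

definition inv_leader :: "'p set \<Rightarrow> 'p config \<Rightarrow> bool" where
  "inv_leader P c \<longleftrightarrow> (\<forall>p\<in>P. st c p = Leader \<longrightarrow> Se c = {phead c p})"

definition inv_final :: "'p set \<Rightarrow> 'p config \<Rightarrow> bool" where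
  "inv_final P c \<longleftrightarrow> (\<forall>p\<in>P. fin c p \<longrightarrow> st c p \<noteq> Undecided)"

text \<open>Unoccupied eligible points are hole points of the initial shape; they stay surrounded by
  eligible points because an eroded point has at most one surrounded neighbour, and if that one
  is unoccupied the eroding particle moves into it.\<close>
definition inv_cover :: "'p set \<Rightarrow> 'p config \<Rightarrow> bool" where
  "inv_cover P c \<longleftrightarrow> (\<forall>x\<in>Se c. (\<exists>p\<in>P. phead c p = x \<and> st c p \<noteq> Follower) \<or>
     (x \<notin> occupied P c \<and> (\<forall>i. nb x i \<in> Se c)))"

definition dle_inv :: "'p set \<Rightarrow> ('p \<Rightarrow> nat) \<Rightarrow> 'p config \<Rightarrow> bool" where
  "dle_inv P off c \<longleftrightarrow> finite P \<and> solid (Se c) \<and> inj_on (phead c) P \<and> inv_undecided P off c \<and>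
     inv_leader P c \<and> inv_final P c \<and> inv_cover P c"

lemma port_pt_eq_nb: "port_pt off p x j = nb x (j + off p)"
  by (simp add: port_pt_def)

lemma adj_port_pt: "adj x (port_pt off p x j)"
  by (simp add: port_pt_eq_nb adj_nb)

lemma port_pt_surj: "\<exists>j<6. port_pt off p x j = nb x i"
proof -
  let ?j = "(i mod 6 + 6 - off p mod 6) mod 6"
  have "(off p + ?j) mod 6 = i mod 6" using add_offset_mod6[of "i mod 6" "off p"] by simp
  then have "port_pt off p x ?j = nb x i" by (metis port_pt_eq_nb nb_mod add.commute)
  then show ?thesis by (intro exI[of _ ?j]) simp
qed

lemma solid_Diff_SCE:
  assumes solid: "solid S" and sce: "SCE S v" and n: "n \<in> S" "n \<noteq> v"
  shows "solid (S - {v})"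
proof -
  have red: "redundant S v" and ob: "v \<in> outer_boundary S" using sce by (auto simp: SCE_def erodable_def)
  have v: "v \<in> S" using red by (simp add: redundant_def boundary_point_def)
  have "connected_pts (S - {v})"
    using solid v red by (intro connected_Diff_redundant) (auto simp: solid_def redundant_def nbset_def)
  moreover have "outer_face (S - {v}) q" if "q \<notin> S - {v}" for q
  proof (cases "q = v")
    case False
    with that solid have "outer_face S q" unfolding solid_def simply_connected_def by blast
    then show ?thesis by (rule outer_face_antimono[rotated]) auto
  next
    case True
    obtain i where i: "outer_face S (nb v i)" using ob by (auto simp: outer_boundary_def)
    then have "nb v i \<notin> S" by (simp add: outer_face_def)
    then have "(v, nb v i) \<in> (E (- (S - {v})))\<^sup>*" by (intro E_rtrancl_edge) (auto simp: adj_nb)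
    with i True show ?thesis using outer_face_via[of "S - {v}" S "nb v i" v] by auto
  qed
  ultimately show ?thesis using solid n by (auto simp: solid_def simply_connected_def)
qed

lemma surrounded_nb_unique:
  assumes three: "nb v i \<notin> S" "nb v (i + 1) \<notin> S" "nb v (i + 2) \<notin> S"
    and u: "u \<in> S" "\<forall>j. nb u j \<in> S" "adj v u"
  shows "u = nb v (i + 4)"
proof -
  obtain j where "u = nb v j" using u(3) by (auto simp: adj_def)
  define d where "d = (j mod 6 + 6 - i mod 6) mod 6"
  have "(i + d) mod 6 = j mod 6" using add_offset_mod6[of "j mod 6" i] by (simp add: d_def)
  then have ud: "u = nb v (i + d)" using \<open>u = nb v j\<close> nb_mod by metis
  have "d < 6" by (simp add: d_def)
  then consider "d = 0" | "d = 1" | "d = 2" | "d = 3" | "d = 4" | "d = 5" by linarith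
  then show ?thesis
  proof cases
    case 4
    have e: "i + 2 + 2 = i + 4" "i + 2 + 1 = i + 3" "i + 4 + 3 = i + 7" by simp_all
    have "u = nb (nb v (i + 2)) (i + 4)" using ud 4 nb_nb_next[of v "i + 2", unfolded e] by simp
    then have "nb u (i + 7) = nb v (i + 2)" using nb_nb_opposite[of "nb v (i + 2)" "i + 4", unfolded e] by simp
    with three u show ?thesis by metis
  next
    case 6
    have e: "i + 5 + 2 = i + 7" "i + 5 + 1 = i + 6" by simp_all
    have "nb u (i + 7) = nb v (i + 6)" using ud 6 nb_nb_next[of v "i + 5", unfolded e] by simp
    with three u show ?thesis by (metis nb_add6)
  qed (use ud three u in auto)
qed

lemma no_leader_while_undecided:
  assumes "inv_leader P c" "inj_on (phead c) P" "p \<in> P" "st c p = Undecided" "phead c p \<in> Se c"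
  shows "\<forall>q\<in>P. st c q \<noteq> Leader"
proof (intro ballI notI)
  fix q assume q: "q \<in> P" "st c q = Leader"
  with assms(1) have "Se c = {phead c q}" by (simp add: inv_leader_def)
  with assms(5) have "phead c p = phead c q" by simp
  with assms(2,3) q(1) have "p = q" by (simp add: inj_on_eq_iff)
  with assms(4) q(2) show False by simp
qed

lemma eligible_nb_in_Se:
  assumes "inv_undecided P off c" "p \<in> P" "st c p = Undecided" "elig c p i" "i < 6"
  shows "port_pt off p (phead c p) i \<in> Se c - {phead c p}"
  using assms adj_port_pt[of "phead c p" off p i] adj_irrefl[of "phead c p"] by (auto simp: inv_undecided_def)

lemma forget_point_iff:
  assumes "\<forall>i<6. elig c q i \<longleftrightarrow> port_pt off q (phead c q) i \<in> S" "i < 6"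
  shows "forget_point off c v q i \<longleftrightarrow> port_pt off q (phead c q) i \<in> S - {v}"
  using assms adj_port_pt[of "phead c q" off q i] by (auto simp: forget_point_def)

lemma undecided_other_after_erosion:
  assumes und: "inv_undecided P off c" and inj: "inj_on (phead c) P"
    and pq: "p \<in> P" "q \<in> P" "q \<noteq> p" and un: "st c q = Undecided"
  shows "phead c q \<in> Se c - {phead c p} \<and>
    (\<forall>i<6. forget_point off c (phead c p) q i \<longleftrightarrow> port_pt off q (phead c q) i \<in> Se c - {phead c p})"
proof -
  have "phead c q \<in> Se c" and acc: "\<forall>i<6. elig c q i \<longleftrightarrow> port_pt off q (phead c q) i \<in> Se c"
    using und pq un by (auto simp: inv_undecided_def)
  moreover have "phead c q \<noteq> phead c p" using inj pq by (simp add: inj_on_eq_iff)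
  ultimately show ?thesis using forget_point_iff[OF acc] by simp
qed

lemma erosion_facts:
  assumes I: "dle_inv P off c" and p: "p \<in> P" "st c p = Undecided" and el: "\<exists>i<6. elig c p i"
    and sce: "SCE (Se c) (phead c p)"
  shows "phead c p \<in> Se c" "solid (Se c - {phead c p})" "\<forall>q\<in>P. st c q \<noteq> Leader"
proof -
  have und: "inv_undecided P off c" using I by (simp add: dle_inv_def)
  show v: "phead c p \<in> Se c" using und p by (simp add: inv_undecided_def)
  obtain i where "i < 6" "elig c p i" using el by blast
  with und p have "port_pt off p (phead c p) i \<in> Se c - {phead c p}" by (intro eligible_nb_in_Se)
  then show "solid (Se c - {phead c p})" using I sce by (intro solid_Diff_SCE) (auto simp: dle_inv_def)
  show "\<forall>q\<in>P. st c q \<noteq> Leader" using I p v by (intro no_leader_while_undecided) (auto simp: dle_inv_def)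
qed

lemma inv_cover_expand:
  assumes cover: "inv_cover P c" and p: "p \<in> P" "st c p = Undecided"
    and sce: "SCE (Se c) (phead c p)" and u: "u \<in> free_targets P c (phead c p)"
    and c': "Se c' = Se c - {phead c p}" "phead c' = (phead c)(p := u)" "ptail c' = ptail c" "st c' = st c"
  shows "inv_cover P c'"
  unfolding inv_cover_def
proof
  let ?v = "phead c p"
  fix x assume "x \<in> Se c'"
  then have x: "x \<in> Se c" "x \<noteq> ?v" using c' by auto
  obtain i where three: "nb ?v i \<notin> Se c" "nb ?v (i + 1) \<notin> Se c" "nb ?v (i + 2) \<notin> Se c"
    using SCE_three_outside[OF sce] by blast
  have uS: "u \<in> Se c" "adj ?v u" "u \<notin> occupied P c" using u by (auto simp: free_targets_def)
  then have u_inner: "\<forall>j. nb u j \<in> Se c" using cover by (auto simp: inv_cover_def occupied_def)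
  from cover x(1) consider q where "q \<in> P" "phead c q = x" "st c q \<noteq> Follower"
    | "x \<notin> occupied P c" "\<forall>j. nb x j \<in> Se c"
    unfolding inv_cover_def by blast
  then show "(\<exists>q\<in>P. phead c' q = x \<and> st c' q \<noteq> Follower) \<or> x \<notin> occupied P c' \<and> (\<forall>j. nb x j \<in> Se c')"
  proof cases
    case 1
    with x(2) have "q \<noteq> p" by auto
    with 1 c' show ?thesis by auto
  next
    case 2
    show ?thesis
    proof (cases "x = u")
      case True
      with p c' show ?thesis by auto
    next
      case False
      have "\<not> adj ?v x"
        using surrounded_nb_unique[OF three x(1) 2(2)] surrounded_nb_unique[OF three uS(1) u_inner uS(2)]
          False by auto
      then have "nb x j \<noteq> ?v" for j using adj_nb adj_sym by metis
      with 2 c' have "\<forall>j. nb x j \<in> Se c'" by auto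
      moreover have "x \<notin> occupied P c'" using 2(1) False c' by (auto simp: occupied_def)
      ultimately show ?thesis by blast
    qed
  qed
qed

lemma inv_cover_follower:
  assumes cover: "inv_cover P c" and p: "p \<in> P"
    and empty: "free_targets P c (phead c p) = {}"
    and c': "Se c' = Se c - {phead c p}" "phead c' = phead c" "ptail c' = ptail c"
      "st c' = (st c)(p := Follower)"
  shows "inv_cover P c'"
  unfolding inv_cover_def
proof
  let ?v = "phead c p"
  fix x assume "x \<in> Se c'"
  then have x: "x \<in> Se c" "x \<noteq> ?v" using c' by auto
  from cover x(1) consider q where "q \<in> P" "phead c q = x" "st c q \<noteq> Follower"
    | "x \<notin> occupied P c" "\<forall>j. nb x j \<in> Se c"
    unfolding inv_cover_def by blast
  then show "(\<exists>q\<in>P. phead c' q = x \<and> st c' q \<noteq> Follower) \<or> x \<notin> occupied P c' \<and> (\<forall>j. nb x j \<in> Se c')"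
  proof cases
    case 1
    with x(2) have "q \<noteq> p" by auto
    with 1 c' show ?thesis by auto
  next
    case 2
    with x empty have "\<not> adj ?v x" unfolding free_targets_def by blast
    then have "nb x j \<noteq> ?v" for j using adj_nb adj_sym by metis
    with 2 c' show ?thesis by (auto simp: occupied_def)
  qed
qed

lemma dle_inv_contract:
  assumes I: "dle_inv P off c" and p: "p \<in> P"
    and c': "c' = c\<lparr>ptail := (ptail c)(p := phead c p)\<rparr>"
  shows "dle_inv P off c'"
proof -
  have "occupied P c' \<subseteq> occupied P c" using p c' by (auto simp: occupied_def)
  with I c' have "inv_cover P c'" by (auto simp: dle_inv_def inv_cover_def)
  with I c' show ?thesis
    by (simp add: dle_inv_def inv_undecided_def inv_leader_def inv_final_def)
qed

lemma dle_inv_terminate: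
  assumes I: "dle_inv P off c" and un: "st c p \<noteq> Undecided"
    and c': "c' = c\<lparr>fin := (fin c)(p := True)\<rparr>"
  shows "dle_inv P off c'"
  using I un c' by (simp add: dle_inv_def inv_undecided_def inv_leader_def inv_final_def
      inv_cover_def occupied_def)

lemma dle_inv_leader:
  assumes I: "dle_inv P off c" and p: "p \<in> P" "st c p = Undecided" and el: "\<forall>i<6. \<not> elig c p i"
    and c': "c' = c\<lparr>st := (st c)(p := Leader)\<rparr>"
  shows "dle_inv P off c'"
proof -
  let ?v = "phead c p"
  have v: "?v \<in> Se c" and acc: "\<forall>i<6. elig c p i \<longleftrightarrow> port_pt off p ?v i \<in> Se c"
    using I p by (auto simp: dle_inv_def inv_undecided_def)
  have "\<forall>i<6. nb ?v i \<notin> Se c"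
  proof (intro allI impI)
    fix i :: nat assume "i < 6"
    obtain j where "j < 6" "port_pt off p ?v j = nb ?v i" using port_pt_surj[of off p ?v i] by blast
    with acc el show "nb ?v i \<notin> Se c" by metis
  qed
  then have single: "Se c = {?v}"
    using I v by (intro connected_isolated_singleton) (simp_all add: dle_inv_def solid_def)
  have nolead: "\<forall>q\<in>P. st c q \<noteq> Leader"
    using I p v by (intro no_leader_while_undecided) (simp_all add: dle_inv_def)
  have "inv_undecided P off c'" using I c' by (simp add: dle_inv_def inv_undecided_def)
  moreover have "inv_leader P c'" using nolead single c' by (simp add: inv_leader_def)
  moreover have "inv_final P c'" using I c' by (simp add: dle_inv_def inv_final_def)
  moreover have "inv_cover P c'" using p single c' by (auto simp: inv_cover_def)
  ultimately show ?thesis using I c' by (simp add: dle_inv_def)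
qed

lemma dle_inv_expand:
  assumes I: "dle_inv P off c" and p: "p \<in> P" "st c p = Undecided" and el: "\<exists>i<6. elig c p i"
    and sce: "SCE (Se c) (phead c p)" and u: "u \<in> free_targets P c (phead c p)"
    and c': "c' = c\<lparr>Se := Se c - {phead c p},
         elig := (forget_point off c (phead c p))(p := (\<lambda>j. port_pt off p u j \<noteq> phead c p)),
         phead := (phead c)(p := u)\<rparr>"
  shows "dle_inv P off c'"
proof -
  let ?v = "phead c p"
  have inj: "inj_on (phead c) P" and und: "inv_undecided P off c" and cover: "inv_cover P c"
    using I by (auto simp: dle_inv_def)
  have u_free: "u \<in> Se c - {?v}" "u \<notin> phead c ` P" using u by (auto simp: free_targets_def occupied_def)
  then have "\<forall>j. nb u j \<in> Se c" using cover by (auto simp: inv_cover_def occupied_def)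
  then have port_u: "port_pt off p u j \<in> Se c - {?v} \<longleftrightarrow> port_pt off p u j \<noteq> ?v" for j
    by (simp add: port_pt_eq_nb)
  have "inj_on (phead c') P" using inj u_free(2) c' by (simp add: inj_on_fun_updI)
  moreover have "inv_undecided P off c'"
    unfolding inv_undecided_def
  proof (intro ballI impI)
    fix q assume q: "q \<in> P" "st c' q = Undecided"
    show "phead c' q \<in> Se c' \<and> (\<forall>i<6. elig c' q i \<longleftrightarrow> port_pt off q (phead c' q) i \<in> Se c')"
    proof (cases "q = p")
      case True
      with u_free port_u c' show ?thesis by simp
    next
      case False
      with q c' have "st c q = Undecided" by simp
      with False c' show ?thesis using undecided_other_after_erosion[OF und inj p(1) q(1) False] by simp
    qed
  qed
  moreover have "inv_cover P c'"
    using inv_cover_expand[OF cover p sce u] c' by simp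
  moreover have "inv_leader P c'" "inv_final P c'"
    using erosion_facts(3)[OF I p el sce] I c' by (auto simp: inv_leader_def dle_inv_def inv_final_def)
  ultimately show ?thesis using I erosion_facts(2)[OF I p el sce] c' by (simp add: dle_inv_def)
qed

lemma dle_inv_follower:
  assumes I: "dle_inv P off c" and p: "p \<in> P" "st c p = Undecided" and el: "\<exists>i<6. elig c p i"
    and sce: "SCE (Se c) (phead c p)" and empty: "free_targets P c (phead c p) = {}"
    and c': "c' = c\<lparr>Se := Se c - {phead c p}, elig := forget_point off c (phead c p),
         st := (st c)(p := Follower)\<rparr>"
  shows "dle_inv P off c'"
proof -
  have inj: "inj_on (phead c) P" and und: "inv_undecided P off c" and cover: "inv_cover P c"
    using I by (auto simp: dle_inv_def)
  have "inv_undecided P off c'"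
    unfolding inv_undecided_def
  proof (intro ballI impI)
    fix q assume q: "q \<in> P" "st c' q = Undecided"
    then have "q \<noteq> p" "st c q = Undecided" using c' by (auto split: if_splits)
    then show "phead c' q \<in> Se c' \<and> (\<forall>i<6. elig c' q i \<longleftrightarrow> port_pt off q (phead c' q) i \<in> Se c')"
      using undecided_other_after_erosion[OF und inj p(1) q(1)] c' by simp
  qed
  moreover have "inv_cover P c'"
    using inv_cover_follower[OF cover p(1) empty] c' by simp
  moreover have "inv_leader P c'" "inv_final P c'"
    using erosion_facts(3)[OF I p el sce] I c' by (auto simp: inv_leader_def dle_inv_def inv_final_def)
  ultimately show ?thesis using I erosion_facts(2)[OF I p el sce] c' by (simp add: dle_inv_def)
qed

lemma dle_inv_step:
  assumes I: "dle_inv P off c" and p: "p \<in> P" and step: "c' \<in> dle_succ P off c p"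
  shows "dle_inv P off c'"
  using step
proof (cases rule: dle_succ_cases)
  case idle then show ?thesis using I by simp
next
  case contract then show ?thesis using dle_inv_contract[OF I p] by blast
next
  case terminate then show ?thesis using dle_inv_terminate[OF I] by blast
next
  case leader then show ?thesis using dle_inv_leader[OF I p] by blast
next
  case (expand u) then show ?thesis using dle_inv_expand[OF I p] by blast
next
  case follower then show ?thesis using dle_inv_follower[OF I p] by blast
qed

lemma dle_inv_init:
  assumes init: "permitted_init P off c0"
  shows "dle_inv P off c0"
proof -
  let ?S0 = "phead c0 ` P"
  have P: "finite P" "P \<noteq> {}" and inj: "inj_on (phead c0) P" and con: "connected_pts ?S0"
    and ct: "\<forall>p\<in>P. contracted c0 p"
    and p0: "\<forall>p\<in>P. st c0 p = Undecided \<and> \<not> fin c0 p \<and>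
        (\<forall>i<6. elig c0 p i \<longleftrightarrow> \<not> outer_face ?S0 (port_pt off p (phead c0 p) i))"
    and Se0: "Se c0 = area ?S0"
    using init by (auto simp: permitted_init_def)
  have "solid (Se c0)"
    using finite_area[of ?S0] connected_area[OF con] simply_connected_area[of ?S0] subset_area[of ?S0] P
    by (auto simp: solid_def Se0)
  moreover have "inv_undecided P off c0"
    using p0 subset_area[of ?S0] by (auto simp: inv_undecided_def Se0 area_def)
  moreover have "inv_leader P c0" "inv_final P c0" using p0 by (auto simp: inv_leader_def inv_final_def)
  moreover have "inv_cover P c0"
    unfolding inv_cover_def
  proof
    fix x assume x: "x \<in> Se c0"
    show "(\<exists>p\<in>P. phead c0 p = x \<and> st c0 p \<noteq> Follower) \<or> x \<notin> occupied P c0 \<and> (\<forall>i. nb x i \<in> Se c0)"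
    proof (cases "x \<in> ?S0")
      case True
      with p0 show ?thesis by auto
    next
      case False
      with ct have "x \<notin> occupied P c0" by (auto simp: occupied_def contracted_def)
      moreover have "\<forall>i. nb x i \<in> Se c0" using nb_hole_point_in_area[of x ?S0] x False by (simp add: Se0)
      ultimately show ?thesis by blast
    qed
  qed
  ultimately show ?thesis using P inj by (simp add: dle_inv_def)
qed

section \<open>Termination and the elected leader\<close>

text \<open>Contracting, terminating and deciding lower the weight of the active particle; eroding a
  point raises it by at most one but removes a point from Se.\<close>
definition particle_weight :: "'p config \<Rightarrow> 'p \<Rightarrow> nat" where
  "particle_weight c q = (if fin c q then 0 else 1) + (if st c q = Undecided then 2 else 0)
     + (if contracted c q then 0 else 1)"

definition potential :: "'p set \<Rightarrow> 'p config \<Rightarrow> nat" where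
  "potential P c = (\<Sum>q\<in>P. particle_weight c q) + 2 * card (Se c)"

lemma sum_less_if_one_changed:
  fixes f g :: "'a \<Rightarrow> nat"
  assumes "finite P" "p \<in> P" "\<forall>q\<in>P. q \<noteq> p \<longrightarrow> g q = f q" "g p < f p + k"
  shows "sum g P < sum f P + k"
proof -
  have "sum g (P - {p}) = sum f (P - {p})" using assms(3) by (intro sum.cong) auto
  with assms show ?thesis by (simp add: sum.remove)
qed

lemma potential_decreases:
  assumes I: "dle_inv P off c" and p: "p \<in> P" and step: "c' \<in> dle_succ P off c p"
  shows "c' = c \<or> potential P c' < potential P c"
proof -
  have finP: "finite P" and finS: "finite (Se c)" using I by (auto simp: dle_inv_def solid_def)
  have weight: "sum (particle_weight c') P < sum (particle_weight c) P + k"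
    if "\<forall>q\<in>P. q \<noteq> p \<longrightarrow> particle_weight c' q = particle_weight c q"
      "particle_weight c' p < particle_weight c p + k" for k
    using sum_less_if_one_changed[OF finP p that] .
  have erode: "card (Se c - {phead c p}) + 1 = card (Se c)" if "st c p = Undecided"
  proof -
    have "phead c p \<in> Se c" using I p that by (simp add: dle_inv_def inv_undecided_def)
    with finS show ?thesis by (metis Suc_eq_plus1 card_Suc_Diff1)
  qed
  from step show ?thesis
  proof (cases rule: dle_succ_cases)
    case idle
    then show ?thesis by simp
  next
    case contract
    then have "sum (particle_weight c') P < sum (particle_weight c) P + 0"
      by (intro weight) (auto simp: particle_weight_def contracted_def)
    with contract show ?thesis by (simp add: potential_def)
  next
    case terminate
    then have "sum (particle_weight c') P < sum (particle_weight c) P + 0"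
      by (intro weight) (auto simp: particle_weight_def contracted_def)
    with terminate show ?thesis by (simp add: potential_def)
  next
    case leader
    then have "sum (particle_weight c') P < sum (particle_weight c) P + 0"
      by (intro weight) (auto simp: particle_weight_def contracted_def)
    with leader show ?thesis by (simp add: potential_def)
  next
    case (expand u)
    then have "phead c p \<noteq> u" by (auto simp: free_targets_def)
    with expand have "sum (particle_weight c') P < sum (particle_weight c) P + 2"
      by (intro weight) (auto simp: particle_weight_def contracted_def)
    with expand erode show ?thesis by (simp add: potential_def)
  next
    case follower
    then have "sum (particle_weight c') P < sum (particle_weight c) P + 2"
      by (intro weight) (auto simp: particle_weight_def contracted_def)
    with follower erode show ?thesis by (simp add: potential_def)
  qed
qed

lemma eventually_constant_if_potential_decreases:
  fixes \<mu> :: "'a \<Rightarrow> nat"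
  assumes dec: "\<And>n. s (Suc n) = s n \<or> \<mu> (s (Suc n)) < \<mu> (s n)"
  obtains N where "\<And>n. N \<le> n \<Longrightarrow> s n = s N"
proof -
  obtain N where min: "\<forall>n. \<mu> (s N) \<le> \<mu> (s n)"
    using ex_has_least_nat[of "\<lambda>_. True" 0 "\<lambda>n. \<mu> (s n)"] by blast
  have "s (N + k) = s N" for k
  proof (induction k)
    case (Suc k)
    with min[rule_format, of "Suc (N + k)"] dec[of "N + k"] show ?case by auto
  qed simp
  then show ?thesis by (metis that le_add_diff_inverse)
qed

lemma fair_exec_fixpoint:
  assumes fair: "fair_exec P off c a" and const: "\<And>n. N \<le> n \<Longrightarrow> c n = c N"
  shows "\<forall>p\<in>P. c N \<in> dle_succ P off (c N) p"
proof
  fix p assume "p \<in> P"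
  with fair obtain m where "N \<le> m" "a m = p" unfolding fair_exec_def by blast
  moreover have "c (Suc m) \<in> dle_succ P off (c m) (a m)" using fair by (simp add: fair_exec_def)
  ultimately show "c N \<in> dle_succ P off (c N) p" using const[of m] const[of "Suc m"] by simp
qed

lemma dle_succ_fixpoint:
  assumes "c \<in> dle_succ P off c p"
  shows "dle_idle P c p"
  using assms
proof (cases rule: dle_succ_cases)
  case contract
  have "ptail c p = phead c p" using arg_cong[where f = "\<lambda>c. ptail c p", OF contract(3)] by simp
  with contract(2) show ?thesis by (simp add: contracted_def dle_idle_def)
next
  case terminate
  have "fin c p" using arg_cong[where f = "\<lambda>c. fin c p", OF terminate(4)] by simp
  with terminate(1) show ?thesis by (simp add: dle_idle_def)
next
  case leader
  have "st c p = Leader" using arg_cong[where f = "\<lambda>c. st c p", OF leader(5)] by simp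
  with leader(3) show ?thesis by (simp add: dle_idle_def)
next
  case (expand u)
  have "phead c p = u" using arg_cong[where f = "\<lambda>c. phead c p", OF expand(7)] by simp
  with expand(6) show ?thesis by (simp add: free_targets_def dle_idle_def)
next
  case follower
  have "st c p = Follower" using arg_cong[where f = "\<lambda>c. st c p", OF follower(7)] by simp
  with follower(3) show ?thesis by (simp add: dle_idle_def)
qed

lemma exists_SCE_if_two_points:
  assumes "solid S" "2 \<le> card S"
  obtains g where "SCE S g"
proof -
  obtain g where "convex_corner S g"
    using assms two_convex_corners_if_two_points[of S] unfolding solid_def two_convex_corners_def by blast
  with assms(1) have "SCE S g" by (intro convex_corner_SCE) (simp_all add: solid_def)
  then show thesis by (rule that)
qed

lemma boundary_point_nonfollower:
  assumes "inv_cover P c" "x \<in> Se c" "nb x i \<notin> Se c"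
  obtains r where "r \<in> P" "phead c r = x" "st c r \<noteq> Follower"
  using assms that unfolding inv_cover_def by blast

lemma two_eligible_points:
  assumes I: "dle_inv P off c" and q: "q \<in> P" "st c q = Undecided" and el: "i < 6" "elig c q i"
  shows "2 \<le> card (Se c)"
proof -
  have "port_pt off q (phead c q) i \<in> Se c - {phead c q}"
    using I q el by (intro eligible_nb_in_Se) (simp_all add: dle_inv_def)
  moreover have "phead c q \<in> Se c" using I q by (simp add: dle_inv_def inv_undecided_def)
  moreover have finS: "finite (Se c)" using I by (simp add: dle_inv_def solid_def)
  ultimately show ?thesis
    using card_mono[OF finS, of "{port_pt off q (phead c q) i, phead c q}"] by auto
qed

lemma fixpoint_all_final:
  assumes I: "dle_inv P off c" and fixpoint: "\<forall>p\<in>P. c \<in> dle_succ P off c p"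
  shows "\<forall>p\<in>P. fin c p"
proof (rule ccontr)
  assume "\<not> (\<forall>p\<in>P. fin c p)"
  then obtain p0 where p0: "p0 \<in> P" "\<not> fin c p0" by blast
  have idle: "dle_idle P c p" if "p \<in> P" for p
    using dle_succ_fixpoint[of c P off p] fixpoint that by blast
  obtain q where q: "q \<in> P" "st c q = Undecided"
    using idle[OF p0(1)] p0 by (cases "st c p0 = Undecided") (auto simp: dle_idle_def neighbours_def)
  then have "\<not> fin c q" using I by (auto simp: dle_inv_def inv_final_def)
  with idle[OF q(1)] q obtain i where "i < 6" "elig c q i" by (auto simp: dle_idle_def)
  with I q have two: "2 \<le> card (Se c)" by (rule two_eligible_points)
  obtain g where sce: "SCE (Se c) g" using I two by (auto simp: dle_inv_def intro: exists_SCE_if_two_points)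
  then have "g \<in> Se c" by (simp add: SCE_def erodable_def redundant_def boundary_point_def)
  moreover obtain j where "nb g j \<notin> Se c" using SCE_three_outside[OF sce] by metis
  ultimately obtain r where r: "r \<in> P" "phead c r = g" "st c r \<noteq> Follower"
    using I by (auto simp: dle_inv_def elim: boundary_point_nonfollower)
  show False
  proof (cases "st c r")
    case Undecided
    then have "\<not> fin c r" using I r(1) by (auto simp: dle_inv_def inv_final_def)
    with idle[OF r(1)] Undecided sce r(2) show False by (simp add: dle_idle_def)
  next
    case Leader
    then have "Se c = {g}" using I r by (auto simp: dle_inv_def inv_leader_def)
    with two show False by simp
  qed (use r in simp)
qed

text \<open>The rightmost eligible point has a non-eligible neighbour, so it carries a non-follower.\<close>
lemma final_unique_leader:
  assumes I: "dle_inv P off c" and final: "\<forall>p\<in>P. fin c p"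
  shows "\<exists>l\<in>P. st c l = Leader \<and> (\<forall>q\<in>P. q \<noteq> l \<longrightarrow> st c q = Follower)"
proof -
  have inj: "inj_on (phead c) P" and lead: "inv_leader P c" and finS: "finite (Se c)"
    and neS: "Se c \<noteq> {}" using I by (auto simp: dle_inv_def solid_def)
  have decided: "\<forall>p\<in>P. st c p \<noteq> Undecided" using I final by (auto simp: dle_inv_def inv_final_def)
  obtain x where "is_arg_min (\<lambda>x. - xcoord2 x) (\<lambda>x. x \<in> Se c) x"
    using ex_is_arg_min_if_finite[OF finS neS] by blast
  then have x: "x \<in> Se c" "\<forall>y\<in>Se c. xcoord2 y \<le> xcoord2 x" unfolding is_arg_min_linorder by auto
  then have "nb x 0 \<notin> Se c" using xcoord2_nb(1)[of x] by fastforce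
  with x(1) I obtain l where l: "l \<in> P" "phead c l = x" "st c l \<noteq> Follower"
    by (auto simp: dle_inv_def elim: boundary_point_nonfollower)
  with decided have leader: "st c l = Leader" by (cases "st c l") auto
  have "st c q = Follower" if q: "q \<in> P" "q \<noteq> l" for q
  proof (cases "st c q")
    case Leader
    with lead q l leader have "phead c q = phead c l" by (auto simp: inv_leader_def)
    with inj_on_eq_iff[OF inj q(1) l(1)] q(2) show ?thesis by simp
  qed (use decided q in auto)
  with l leader show ?thesis by blast
qed

theorem theorem4p3:
  fixes P :: "'p set" and off :: "'p \<Rightarrow> nat"
    and c :: "nat \<Rightarrow> 'p config" and a :: "nat \<Rightarrow> 'p"
  assumes "permitted_init P off (c 0)"
    and "fair_exec P off c a"
  shows "(\<forall>p\<in>P. \<exists>n. fin (c n) p) \<and>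
         (\<exists>n. \<exists>l\<in>P. st (c n) l = Leader \<and> (\<forall>q\<in>P. q \<noteq> l \<longrightarrow> st (c n) q = Follower))"
proof -
  have step: "a n \<in> P" "c (Suc n) \<in> dle_succ P off (c n) (a n)" for n
    using assms(2) by (auto simp: fair_exec_def)
  have I: "dle_inv P off (c n)" for n
    by (induction n) (use dle_inv_init[OF assms(1)] dle_inv_step[OF _ step] in auto)
  obtain N where const: "\<And>n. N \<le> n \<Longrightarrow> c n = c N"
    using eventually_constant_if_potential_decreases[of c "potential P"]
      potential_decreases[OF I step] by blast
  have "\<forall>p\<in>P. fin (c N) p"
    using fixpoint_all_final[OF I fair_exec_fixpoint[OF assms(2) const]] .
  with final_unique_leader[OF I] show ?thesis by blast
qed

end
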